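(* Let $K,L$ be field extensions of a field $C$. The following are equivalent: \begin{enumerate} \item ${\rm Th}_{\exists_1}(K,C)\subseteq{\rm Th}_{\exists_1}(L,C)$; \item (a) there exists an embedding over $C$ of the relative algebraic closure $\overline{C}^K$ of $C$ in $K$ into $L$, and (b) if $K$ is infinite, then so is $L$. \end{enumerate}
   Context: ${\rm Th}_{\exists_1}(K,C)$ is the set of positive boolean combinations of $\mathfrak{L}_{\rm ring}(C)$-sentences (ring language with constants for elements of $C$) of the form $\exists x\,\psi$ or $\psi$ with $\psi$ quantifier-free that hold in $K$. *)

theory Defs
  imports "HOL-Computational_Algebra.Polynomial"
begin

text \<open>A field extension of C is a field K together with a ring homomorphism
  C -> K (automatically injective since C is a field).\<close>
definition ring_hom_fn :: "('a::ring_1 \<Rightarrow> 'b::ring_1) \<Rightarrow> bool" where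
  "ring_hom_fn f \<longleftrightarrow> f 1 = 1 \<and> (\<forall>x y. f (x + y) = f x + f y) \<and> (\<forall>x y. f (x * y) = f x * f y)"

datatype 'c tm = Var | Const 'c | Zero | One
  | Add "'c tm" "'c tm" | Sub "'c tm" "'c tm" | Minus "'c tm" | Mul "'c tm" "'c tm"

primrec tval :: "('c \<Rightarrow> 'k::field) \<Rightarrow> 'k \<Rightarrow> 'c tm \<Rightarrow> 'k" where
  "tval \<iota> a Var = a"
| "tval \<iota> a (Const c) = \<iota> c"
| "tval \<iota> a Zero = 0"
| "tval \<iota> a One = 1"
| "tval \<iota> a (Add s t) = tval \<iota> a s + tval \<iota> a t"
| "tval \<iota> a (Sub s t) = tval \<iota> a s - tval \<iota> a t"
| "tval \<iota> a (Minus s) = - tval \<iota> a s"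
| "tval \<iota> a (Mul s t) = tval \<iota> a s * tval \<iota> a t"

primrec tm_closed :: "'c tm \<Rightarrow> bool" where
  "tm_closed Var = False"
| "tm_closed (Const c) = True"
| "tm_closed Zero = True"
| "tm_closed One = True"
| "tm_closed (Add s t) = (tm_closed s \<and> tm_closed t)"
| "tm_closed (Sub s t) = (tm_closed s \<and> tm_closed t)"
| "tm_closed (Minus s) = tm_closed s"
| "tm_closed (Mul s t) = (tm_closed s \<and> tm_closed t)"

datatype 'c qf = QTrue | QFalse | QEq "'c tm" "'c tm" | QNot "'c qf"
  | QAnd "'c qf" "'c qf" | QOr "'c qf" "'c qf" | QImp "'c qf" "'c qf"

primrec qval :: "('c \<Rightarrow> 'k::field) \<Rightarrow> 'k \<Rightarrow> 'c qf \<Rightarrow> bool" where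
  "qval \<iota> a QTrue = True"
| "qval \<iota> a QFalse = False"
| "qval \<iota> a (QEq s t) = (tval \<iota> a s = tval \<iota> a t)"
| "qval \<iota> a (QNot p) = (\<not> qval \<iota> a p)"
| "qval \<iota> a (QAnd p q) = (qval \<iota> a p \<and> qval \<iota> a q)"
| "qval \<iota> a (QOr p q) = (qval \<iota> a p \<or> qval \<iota> a q)"
| "qval \<iota> a (QImp p q) = (qval \<iota> a p \<longrightarrow> qval \<iota> a q)"

primrec qf_closed :: "'c qf \<Rightarrow> bool" where
  "qf_closed QTrue = True"
| "qf_closed QFalse = True"
| "qf_closed (QEq s t) = (tm_closed s \<and> tm_closed t)"
| "qf_closed (QNot p) = qf_closed p"
| "qf_closed (QAnd p q) = (qf_closed p \<and> qf_closed q)"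
| "qf_closed (QOr p q) = (qf_closed p \<and> qf_closed q)"
| "qf_closed (QImp p q) = (qf_closed p \<and> qf_closed q)"

text \<open>Positive boolean combinations of sentences of the form (EX x. psi) or psi
  (psi quantifier-free; in the second case psi must be a sentence, i.e. closed).\<close>
datatype 'c ex1 = ExS "'c qf" | QfS "'c qf" | SAnd "'c ex1" "'c ex1" | SOr "'c ex1" "'c ex1"

primrec ex1_wf :: "'c ex1 \<Rightarrow> bool" where
  "ex1_wf (ExS p) = True"
| "ex1_wf (QfS p) = qf_closed p"
| "ex1_wf (SAnd s t) = (ex1_wf s \<and> ex1_wf t)"
| "ex1_wf (SOr s t) = (ex1_wf s \<and> ex1_wf t)"

primrec ex1_holds :: "('c \<Rightarrow> 'k::field) \<Rightarrow> 'c ex1 \<Rightarrow> bool" where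
  "ex1_holds \<iota> (ExS p) = (\<exists>a. qval \<iota> a p)"
| "ex1_holds \<iota> (QfS p) = qval \<iota> 0 p"
| "ex1_holds \<iota> (SAnd s t) = (ex1_holds \<iota> s \<and> ex1_holds \<iota> t)"
| "ex1_holds \<iota> (SOr s t) = (ex1_holds \<iota> s \<or> ex1_holds \<iota> t)"

definition Th_ex1 :: "('c \<Rightarrow> 'k::field) \<Rightarrow> 'c ex1 set" where
  "Th_ex1 \<iota> = {\<phi>. ex1_wf \<phi> \<and> ex1_holds \<iota> \<phi>}"

definition rel_alg_closure :: "('c::field \<Rightarrow> 'k::field) \<Rightarrow> 'k set" where
  "rel_alg_closure \<iota> = {a. \<exists>p::'c poly. p \<noteq> 0 \<and> poly (map_poly \<iota> p) a = 0}"

definition embedding_over :: "('c \<Rightarrow> 'k::field) \<Rightarrow> ('c \<Rightarrow> 'l::field) \<Rightarrow> 'k set \<Rightarrow> ('k \<Rightarrow> 'l) \<Rightarrow> bool" where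
  "embedding_over \<iota>K \<iota>L A \<sigma> \<longleftrightarrow>
     inj_on \<sigma> A \<and> \<sigma> 1 = 1 \<and>
     (\<forall>x\<in>A. \<forall>y\<in>A. \<sigma> (x + y) = \<sigma> x + \<sigma> y \<and> \<sigma> (x * y) = \<sigma> x * \<sigma> y) \<and>
     (\<forall>c. \<sigma> (\<iota>K c) = \<iota>L c)"

end

theory Submission
  imports Defs "HOL-Algebra.Algebraic_Closure_Type" "HOL-Analysis.Function_Topology"
begin

text \<open>
  (2) \<Longrightarrow> (1): a witness in \<open>K\<close> of an existential sentence is either algebraic over \<open>C\<close>, and then
  its image under the embedding is a witness in \<open>L\<close>; or it is transcendental, and then it satisfies
  exactly those atoms whose two sides are equal as polynomials, so every element of \<open>L\<close> outside the
  finitely many roots of the remaining atoms is a witness; there is one, as \<open>K\<close>, hence \<open>L\<close>, is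
  infinite.

  (1) \<Longrightarrow> (2b): a finite \<open>L\<close> with \<open>n\<close> elements satisfies \<open>\<forall>x. x^(n + n!) = x^n\<close>, which fails in
  an infinite \<open>K\<close>.

  (1) \<Longrightarrow> (2a): by (1), the minimal polynomial over \<open>C\<close> of every \<open>y\<close> algebraic over \<open>C\<close> has a root
  in \<open>L\<close>. Hence every finitely generated \<open>C\<close>-subalgebra \<open>W = C[S]\<close> of \<open>K\<close> with \<open>S\<close> algebraic has a
  \<open>C\<close>-homomorphism into \<open>L\<close>. If \<open>C\<close> is finite, \<open>W\<close> is a finite field, generated by a single
  element. If \<open>C\<close> is infinite, consider the finitely many homomorphisms of \<open>W\<close> into the algebraic
  closure of \<open>L\<close>. If none mapped \<open>W\<close> into \<open>L\<close>, the preimages of \<open>L\<close> would be finitely many proper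
  \<open>C\<close>-subspaces of \<open>W\<close>; yet they cover \<open>W\<close>, because sending any \<open>y \<in> W\<close> to a root in \<open>L\<close> of its
  minimal polynomial extends to \<open>W\<close>, and over an infinite field no vector space is a finite union
  of proper subspaces. Finally, these homomorphisms take values in the finite sets of conjugates,
  so compactness of a product of finite discrete spaces glues them to an embedding of the relative
  algebraic closure.
\<close>

hide_const (open)
  UnivPoly.up_ring.coeff UnivPoly.up_ring.monom Polynomials.degree Polynomials.lead_coeff ring.monom

definition is_subring :: "'k::comm_ring_1 set \<Rightarrow> bool" where
  "is_subring R \<longleftrightarrow> 0 \<in> R \<and> 1 \<in> R \<and> (\<forall>x\<in>R. \<forall>y\<in>R. x + y \<in> R \<and> x * y \<in> R \<and> - x \<in> R)"

definition ring_hom_on :: "'k::comm_ring_1 set \<Rightarrow> ('k \<Rightarrow> 'm::comm_ring_1) \<Rightarrow> bool" where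
  "ring_hom_on R \<phi> \<longleftrightarrow> \<phi> 0 = 0 \<and> \<phi> 1 = 1 \<and>
     (\<forall>x\<in>R. \<forall>y\<in>R. \<phi> (x + y) = \<phi> x + \<phi> y \<and> \<phi> (x * y) = \<phi> x * \<phi> y)"

definition poly_over :: "'k::comm_ring_1 set \<Rightarrow> 'k poly \<Rightarrow> bool" where
  "poly_over R p \<longleftrightarrow> (\<forall>i. coeff p i \<in> R)"

lemma is_subringD:
  assumes "is_subring R"
  shows "0 \<in> R" "1 \<in> R" "x \<in> R \<Longrightarrow> y \<in> R \<Longrightarrow> x + y \<in> R" "x \<in> R \<Longrightarrow> y \<in> R \<Longrightarrow> x * y \<in> R"
    "x \<in> R \<Longrightarrow> - x \<in> R" "x \<in> R \<Longrightarrow> y \<in> R \<Longrightarrow> x - y \<in> R" "x \<in> R \<Longrightarrow> x ^ n \<in> R"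
proof -
  show R: "0 \<in> R" "1 \<in> R" "x \<in> R \<Longrightarrow> y \<in> R \<Longrightarrow> x + y \<in> R" "x \<in> R \<Longrightarrow> y \<in> R \<Longrightarrow> x * y \<in> R"
    "x \<in> R \<Longrightarrow> - x \<in> R" for x y
    using assms by (auto simp: is_subring_def)
  then show "x \<in> R \<Longrightarrow> y \<in> R \<Longrightarrow> x - y \<in> R"
    by (metis diff_conv_add_uminus)
  show "x \<in> R \<Longrightarrow> x ^ n \<in> R"
    by (induction n) (use R in auto)
qed

lemma ring_hom_onD:
  assumes "ring_hom_on R \<phi>"
  shows "\<phi> 0 = 0" "\<phi> 1 = 1" "x \<in> R \<Longrightarrow> y \<in> R \<Longrightarrow> \<phi> (x + y) = \<phi> x + \<phi> y"
    "x \<in> R \<Longrightarrow> y \<in> R \<Longrightarrow> \<phi> (x * y) = \<phi> x * \<phi> y"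
  using assms by (auto simp: ring_hom_on_def)

lemma ring_hom_on_uminus:
  assumes "ring_hom_on R \<phi>" "is_subring R" "x \<in> R"
  shows "\<phi> (- x) = - \<phi> x"
proof -
  have "\<phi> x + \<phi> (- x) = 0"
    using ring_hom_onD(3)[OF assms(1,3) is_subringD(5)[OF assms(2,3)]] ring_hom_onD(1)[OF assms(1)]
    by simp
  then show ?thesis
    by (simp add: eq_neg_iff_add_eq_0 add.commute)
qed

lemma ring_hom_on_diff:
  assumes "ring_hom_on R \<phi>" "is_subring R" "x \<in> R" "y \<in> R"
  shows "\<phi> (x - y) = \<phi> x - \<phi> y"
  using ring_hom_onD(3)[OF assms(1,3) is_subringD(5)[OF assms(2,4)]]
    ring_hom_on_uminus[OF assms(1,2,4)]
  by simp

lemma ring_hom_on_power: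
  assumes "ring_hom_on R \<phi>" "is_subring R" "x \<in> R"
  shows "\<phi> (x ^ n) = \<phi> x ^ n"
  by (induction n) (use assms in \<open>simp_all add: ring_hom_onD is_subringD\<close>)

lemma sum_in_subring:
  assumes "is_subring R" "\<And>i. i \<in> I \<Longrightarrow> f i \<in> R"
  shows "(\<Sum>i\<in>I. f i) \<in> R"
  using assms(2)
  by (induction I rule: infinite_finite_induct) (simp_all add: is_subringD[OF assms(1)])

lemma ring_hom_on_sum:
  assumes "ring_hom_on R \<phi>" "is_subring R" "\<And>i. i \<in> I \<Longrightarrow> f i \<in> R"
  shows "\<phi> (\<Sum>i\<in>I. f i) = (\<Sum>i\<in>I. \<phi> (f i))"
  using assms(3)
proof (induction I rule: infinite_finite_induct)
  case (insert i I)
  then show ?case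
    using ring_hom_onD(3)[OF assms(1)] sum_in_subring[OF assms(2), of I f] by simp
qed (simp_all add: ring_hom_onD(1)[OF assms(1)])

lemma poly_over_add: "is_subring R \<Longrightarrow> poly_over R p \<Longrightarrow> poly_over R q \<Longrightarrow> poly_over R (p + q)"
  by (simp add: poly_over_def is_subringD)

lemma poly_over_diff: "is_subring R \<Longrightarrow> poly_over R p \<Longrightarrow> poly_over R q \<Longrightarrow> poly_over R (p - q)"
  by (simp add: poly_over_def is_subringD)

lemma poly_over_mult: "is_subring R \<Longrightarrow> poly_over R p \<Longrightarrow> poly_over R q \<Longrightarrow> poly_over R (p * q)"
  by (auto simp: poly_over_def coeff_mult is_subringD intro!: sum_in_subring)

lemma poly_over_const: "is_subring R \<Longrightarrow> c \<in> R \<Longrightarrow> poly_over R [:c:]"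
  by (simp add: poly_over_def coeff_pCons is_subringD split: nat.split)

lemma poly_over_X: "is_subring R \<Longrightarrow> poly_over R [:0, 1:]"
  by (simp add: poly_over_def coeff_pCons is_subringD split: nat.split)

lemma poly_over_monom: "is_subring R \<Longrightarrow> c \<in> R \<Longrightarrow> poly_over R (monom c n)"
  by (simp add: poly_over_def is_subringD)

lemma map_poly_add_on:
  assumes "ring_hom_on R \<phi>" "poly_over R p" "poly_over R q"
  shows "map_poly \<phi> (p + q) = map_poly \<phi> p + map_poly \<phi> q"
  using assms by (intro poly_eqI) (simp add: coeff_map_poly ring_hom_on_def poly_over_def)

lemma map_poly_diff_on:
  assumes "ring_hom_on R \<phi>" "is_subring R" "poly_over R p" "poly_over R q"
  shows "map_poly \<phi> (p - q) = map_poly \<phi> p - map_poly \<phi> q"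
  using assms
  by (intro poly_eqI) (simp add: coeff_map_poly ring_hom_on_diff ring_hom_onD poly_over_def)

lemma map_poly_mult_on:
  assumes "ring_hom_on R \<phi>" "is_subring R" "poly_over R p" "poly_over R q"
  shows "map_poly \<phi> (p * q) = map_poly \<phi> p * map_poly \<phi> q"
proof (intro poly_eqI)
  fix n
  have "coeff (map_poly \<phi> (p * q)) n = (\<Sum>i\<le>n. \<phi> (coeff p i * coeff q (n - i)))"
    using assms
    by (simp add: coeff_map_poly ring_hom_onD coeff_mult ring_hom_on_sum poly_over_def is_subringD)
  also have "\<dots> = coeff (map_poly \<phi> p * map_poly \<phi> q) n"
    using assms
    by (auto simp: coeff_map_poly ring_hom_onD coeff_mult poly_over_def intro!: sum.cong)
  finally show "coeff (map_poly \<phi> (p * q)) n = coeff (map_poly \<phi> p * map_poly \<phi> q) n" .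
qed

lemma poly_in_subring:
  assumes "is_subring R" "poly_over R p" "x \<in> R"
  shows "poly p x \<in> R"
  using assms unfolding poly_altdef poly_over_def by (auto intro!: sum_in_subring is_subringD)

lemma poly_altdef_le:
  fixes p :: "'a::comm_semiring_1 poly"
  assumes "degree p \<le> n"
  shows "poly p x = (\<Sum>i\<le>n. coeff p i * x ^ i)"
proof -
  have "poly p x = poly (\<Sum>i\<le>n. monom (coeff p i) i) x"
    using poly_as_sum_of_monoms'[OF assms] by simp
  then show ?thesis
    by (simp add: poly_sum poly_monom)
qed

lemma degree_pos_if_poly_eq_0:
  assumes "p \<noteq> 0" "poly p x = 0"
  shows "degree p > 0"
proof (rule ccontr)
  assume "\<not> degree p > 0"
  then obtain c where "p = [:c:]"
    by (metis degree_eq_zeroE neq0_conv)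
  then show False
    using assms by simp
qed

lemma degree_pseudo_reduce_less:
  fixes m g :: "'a::comm_ring_1 poly"
  assumes "degree m > 0" "degree m \<le> degree g"
  shows "degree ([:lead_coeff m:] * g - monom (lead_coeff g) (degree g - degree m) * m) < degree g"
    (is "degree ?g' < _")
proof -
  have "degree ([:lead_coeff m:] * g) \<le> degree g"
    using degree_mult_le[of "[:lead_coeff m:]" g] by simp
  moreover have "degree (monom (lead_coeff g) (degree g - degree m) * m) \<le> degree g"
    using degree_mult_le[of "monom (lead_coeff g) (degree g - degree m)" m]
      degree_monom_le[of "lead_coeff g" "degree g - degree m"] assms(2)
    by linarith
  ultimately have le: "degree ?g' \<le> degree g"
    by (rule degree_diff_le)
  have "coeff (monom (lead_coeff g) (degree g - degree m) * m) (degree g) =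
      lead_coeff g * lead_coeff m"
    using assms(2) by (simp add: coeff_monom_mult)
  then have top: "coeff ?g' (degree g) = 0"
    by (simp add: mult.commute)
  have "\<forall>j\<ge>degree g. coeff ?g' j = 0"
  proof (intro allI impI)
    fix j
    assume "degree g \<le> j"
    show "coeff ?g' j = 0"
    proof (cases "j = degree g")
      case False
      with le \<open>degree g \<le> j\<close> have "degree ?g' < j"
        by linarith
      then show ?thesis
        by (rule coeff_eq_0)
    qed (use top in simp)
  qed
  then show ?thesis
    using assms by (intro degree_lessI) auto
qed

lemma ring_hom_on_poly:
  assumes "ring_hom_on R \<phi>" "is_subring R" "poly_over R p" "x \<in> R"
  shows "\<phi> (poly p x) = poly (map_poly \<phi> p) (\<phi> x)"
proof -
  have "\<phi> (poly p x) = (\<Sum>i\<le>degree p. \<phi> (coeff p i * x ^ i))"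
    unfolding poly_altdef using assms by (simp add: poly_over_def is_subringD ring_hom_on_sum)
  also have "\<dots> = (\<Sum>i\<le>degree p. \<phi> (coeff p i) * \<phi> x ^ i)"
    using assms by (simp add: poly_over_def is_subringD ring_hom_onD ring_hom_on_power)
  also have "\<dots> = (\<Sum>i\<le>degree p. coeff (map_poly \<phi> p) i * \<phi> x ^ i)"
    using assms(1) by (simp add: coeff_map_poly ring_hom_onD)
  also have "\<dots> = poly (map_poly \<phi> p) (\<phi> x)"
    by (rule poly_altdef_le[OF map_poly_degree_leq, symmetric])
  finally show ?thesis .
qed

locale field_ext =
  fixes \<iota> :: "'c::field \<Rightarrow> 'k::field"
  assumes ring_hom: "ring_hom_fn \<iota>"
begin

lemma hom_add [simp]: "\<iota> (x + y) = \<iota> x + \<iota> y"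
  and hom_mult [simp]: "\<iota> (x * y) = \<iota> x * \<iota> y"
  and hom_one [simp]: "\<iota> 1 = 1"
  using ring_hom unfolding ring_hom_fn_def by blast+

lemma hom_zero [simp]: "\<iota> 0 = 0"
proof -
  have "\<iota> 0 + \<iota> 0 = \<iota> 0 + 0"
    using hom_add[of 0 0] by simp
  then show ?thesis
    by (rule add_left_imp_eq)
qed

lemma hom_uminus [simp]: "\<iota> (- x) = - \<iota> x"
  using hom_add[of x "- x"] by (simp add: eq_neg_iff_add_eq_0 add.commute)

lemma hom_diff [simp]: "\<iota> (x - y) = \<iota> x - \<iota> y"
  using hom_add[of x "- y"] by simp

lemma hom_inverse [simp]: "\<iota> (inverse x) = inverse (\<iota> x)"
proof (cases "x = 0")
  case False
  then have "\<iota> x * \<iota> (inverse x) = 1"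
    using hom_mult[of x "inverse x"] by simp
  then show ?thesis
    by (rule inverse_unique[symmetric])
qed simp

lemma hom_divide [simp]: "\<iota> (x / y) = \<iota> x / \<iota> y"
  by (simp add: divide_inverse)

lemma hom_eq_iff [simp]: "\<iota> x = \<iota> y \<longleftrightarrow> x = y"
proof
  assume "\<iota> x = \<iota> y"
  show "x = y"
  proof (rule ccontr)
    assume "x \<noteq> y"
    then have "\<iota> (x - y) * \<iota> (inverse (x - y)) = 1"
      using hom_mult[of "x - y" "inverse (x - y)"] by simp
    then show False
      using \<open>\<iota> x = \<iota> y\<close> by simp
  qed
qed simp

lemma hom_eq_0_iff [simp]: "\<iota> x = 0 \<longleftrightarrow> x = 0"
  using hom_eq_iff[of x 0] by simp

lemma ring_hom_on_UNIV: "ring_hom_on UNIV \<iota>"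
  by (simp add: ring_hom_on_def)

lemma map_poly_add [simp]: "map_poly \<iota> (p + q) = map_poly \<iota> p + map_poly \<iota> q"
  by (intro poly_eqI) (simp add: coeff_map_poly)

lemma map_poly_uminus [simp]: "map_poly \<iota> (- p) = - map_poly \<iota> p"
  by (intro poly_eqI) (simp add: coeff_map_poly)

lemma map_poly_diff [simp]: "map_poly \<iota> (p - q) = map_poly \<iota> p - map_poly \<iota> q"
  by (intro poly_eqI) (simp add: coeff_map_poly)

lemma map_poly_mult [simp]: "map_poly \<iota> (p * q) = map_poly \<iota> p * map_poly \<iota> q"
  by (rule map_poly_mult_on[OF ring_hom_on_UNIV]) (auto simp: poly_over_def is_subring_def)

lemma map_poly_eq_0_iff' [simp]: "map_poly \<iota> p = 0 \<longleftrightarrow> p = 0"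
  by (simp add: map_poly_eq_0_iff)

lemma degree_map_poly_hom [simp]: "degree (map_poly \<iota> p) = degree p"
  by (rule degree_map_poly) simp

sublocale vs: vector_space "\<lambda>c x. \<iota> c * x"
  by unfold_locales (simp_all add: algebra_simps)

abbreviation Alg :: "'k set" where
  "Alg \<equiv> rel_alg_closure \<iota>"

lemma AlgI: "p \<noteq> 0 \<Longrightarrow> poly (map_poly \<iota> p) x = 0 \<Longrightarrow> x \<in> Alg"
  unfolding rel_alg_closure_def by blast

lemma hom_in_Alg: "\<iota> c \<in> Alg"
  by (rule AlgI[of "[:- c, 1:]"]) (auto simp: map_poly_pCons)

lemma Alg_if_power_eq:
  assumes "x ^ i = x ^ j" "i \<noteq> j"
  shows "x \<in> Alg"
proof (rule AlgI)
  have "coeff (monom (1::'c) i - monom 1 j) i \<noteq> 0"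
    using assms(2) by simp
  then show "monom (1::'c) i - monom 1 j \<noteq> 0"
    by (metis coeff_0)
  show "poly (map_poly \<iota> (monom 1 i - monom 1 j)) x = 0"
    using assms(1) by (simp add: map_poly_monom poly_monom)
qed

lemma Alg_eq_UNIV_if_finite:
  assumes "finite (UNIV :: 'k set)"
  shows "Alg = UNIV"
proof -
  have "x \<in> Alg" for x
  proof -
    have "\<not> inj (\<lambda>n::nat. x ^ n)"
      using assms infinite_UNIV_nat finite_imageD[of "\<lambda>n::nat. x ^ n" UNIV]
      by (metis finite_subset top_greatest)
    then show ?thesis
      unfolding inj_def by (metis Alg_if_power_eq)
  qed
  then show ?thesis
    by blast
qed

lemma mult_in_span:
  assumes "v \<in> vs.span A" "\<And>b. b \<in> A \<Longrightarrow> a * b \<in> vs.span B"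
  shows "a * v \<in> vs.span B"
  using assms(1)
proof (induction rule: vs.span_induct_alt)
  case (step c x y)
  have "a * (\<iota> c * x + y) = \<iota> c * (a * x) + a * y"
    by (simp add: algebra_simps)
  then show ?case
    using step assms(2) by (simp add: vs.span_add vs.span_scale)
qed (simp add: vs.span_zero)

lemma mult_in_span_products:
  assumes "u \<in> vs.span A" "v \<in> vs.span B"
  shows "u * v \<in> vs.span ((\<lambda>(a, b). a * b) ` (A \<times> B))"
proof -
  have "x * v \<in> vs.span ((\<lambda>(a, b). a * b) ` (A \<times> B))" if "x \<in> A" for x
    by (rule mult_in_span[OF assms(2)]) (use that in \<open>auto intro!: vs.span_base\<close>)
  then have "v * u \<in> vs.span ((\<lambda>(a, b). a * b) ` (A \<times> B))"
    by (intro mult_in_span[OF assms(1)]) (simp add: mult.commute)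
  then show ?thesis
    by (simp add: mult.commute)
qed

lemma power_degree_in_span:
  assumes "p \<noteq> 0" "poly (map_poly \<iota> p) x = 0"
  shows "x ^ degree p \<in> vs.span ((\<lambda>i. x ^ i) ` {..<degree p})"
proof -
  define d where "d = degree p"
  have c: "coeff p d \<noteq> 0"
    using assms(1) by (simp add: d_def)
  have "0 = (\<Sum>i\<le>d. \<iota> (coeff p i) * x ^ i)"
    using assms(2) by (simp add: poly_altdef coeff_map_poly d_def)
  also have "\<dots> = \<iota> (coeff p d) * x ^ d + (\<Sum>i<d. \<iota> (coeff p i) * x ^ i)"
    by (simp add: lessThan_Suc_atMost[symmetric] add.commute)
  finally have "x ^ d = (\<Sum>i<d. \<iota> (- coeff p i / coeff p d) * x ^ i)"
    using c by (simp add: sum_divide_distrib[symmetric] field_simps sum_negf eq_neg_iff_add_eq_0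
        flip: sum_distrib_left)
  also have "\<dots> \<in> vs.span ((\<lambda>i. x ^ i) ` {..<d})"
    by (intro vs.span_sum vs.span_scale vs.span_base) auto
  finally show ?thesis
    unfolding d_def .
qed

lemma powers_in_span_if_power_in_span:
  assumes "d > 0" "x ^ d \<in> vs.span ((\<lambda>i. x ^ i) ` {..<d})"
  shows "x ^ n \<in> vs.span ((\<lambda>i. x ^ i) ` {..<d})"
proof (induction n)
  case 0
  then show ?case
    using assms(1) by (intro vs.span_base) (auto intro: image_eqI[of _ _ 0])
next
  case (Suc n)
  have "x * x ^ n \<in> vs.span ((\<lambda>i. x ^ i) ` {..<d})"
  proof (rule mult_in_span[OF Suc])
    fix b
    assume "b \<in> (\<lambda>i. x ^ i) ` {..<d}"
    then obtain i where i: "i < d" "b = x ^ i"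
      by auto
    show "x * b \<in> vs.span ((\<lambda>i. x ^ i) ` {..<d})"
    proof (cases "Suc i < d")
      case True
      then show ?thesis
        using i by (intro vs.span_base) (auto intro: image_eqI[of _ _ "Suc i"])
    next
      case False
      then show ?thesis
        using assms(2) i by (metis Suc_lessI power_Suc)
    qed
  qed
  then show ?case
    by simp
qed

lemma powers_in_span_low_powers:
  assumes "x \<in> Alg"
  obtains d where "\<And>n. x ^ n \<in> vs.span ((\<lambda>i. x ^ i) ` {..<d})"
proof -
  obtain p where p: "p \<noteq> 0" "poly (map_poly \<iota> p) x = 0"
    using assms unfolding rel_alg_closure_def by blast
  then have "degree p > 0"
    using degree_pos_if_poly_eq_0[of "map_poly \<iota> p" x] by simp
  then show ?thesis
    using that powers_in_span_if_power_in_span power_degree_in_span[OF p] by blast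
qed

lemma Alg_if_dependent_powers:
  assumes "inj_on (\<lambda>n. z ^ n) {..N}" "vs.dependent ((\<lambda>n. z ^ n) ` {..N})"
  shows "z \<in> Alg"
proof -
  obtain T u where T: "T \<subseteq> (\<lambda>n. z ^ n) ` {..N}" "(\<Sum>v\<in>T. \<iota> (u v) * v) = 0" "\<exists>v\<in>T. u v \<noteq> 0"
    using assms(2) unfolding vs.dependent_explicit by blast
  define w where "w n = (if z ^ n \<in> T then u (z ^ n) else 0)" for n
  define q where "q = (\<Sum>n\<le>N. monom (w n) n)"
  have coeff_q: "coeff q n = (if n \<le> N then w n else 0)" for n
    unfolding q_def by (simp add: coeff_sum coeff_monom)
  show ?thesis
  proof (rule AlgI)
    obtain k where "k \<le> N" "z ^ k \<in> T" "u (z ^ k) \<noteq> 0"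
      using T(1,3) by blast
    then have "coeff q k \<noteq> 0"
      by (simp add: coeff_q w_def)
    then show "q \<noteq> 0"
      by auto
    have "degree q \<le> N"
      using coeff_q by (intro degree_le) auto
    then have "poly (map_poly \<iota> q) z = (\<Sum>n\<le>N. \<iota> (w n) * z ^ n)"
      by (simp add: poly_altdef_le coeff_map_poly coeff_q)
    also have "\<dots> = (\<Sum>n\<in>{n. n \<le> N \<and> z ^ n \<in> T}. \<iota> (u (z ^ n)) * z ^ n)"
      by (rule sum.mono_neutral_cong_right) (auto simp: w_def)
    also have "\<dots> = (\<Sum>v\<in>T. \<iota> (u v) * v)"
    proof (rule sym, rule sum.reindex_cong[of "\<lambda>n. z ^ n"])
      show "inj_on (\<lambda>n. z ^ n) {n. n \<le> N \<and> z ^ n \<in> T}"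
        using assms(1) by (rule inj_on_subset) auto
      show "T = (\<lambda>n. z ^ n) ` {n. n \<le> N \<and> z ^ n \<in> T}"
        using T(1) by auto
    qed simp
    finally show "poly (map_poly \<iota> q) z = 0"
      using T(2) by simp
  qed
qed

lemma Alg_if_powers_in_finite_span:
  assumes "finite B" "\<And>n. z ^ n \<in> vs.span B"
  shows "z \<in> Alg"
proof (cases "inj_on (\<lambda>n. z ^ n) {..card B}")
  case False
  then show ?thesis
    unfolding inj_on_def by (metis Alg_if_power_eq)
next
  case True
  then have "card ((\<lambda>n. z ^ n) ` {..card B}) = Suc (card B)"
    by (simp add: card_image)
  moreover have "(\<lambda>n. z ^ n) ` {..card B} \<subseteq> vs.span B"
    using assms(2) by auto
  ultimately have "vs.dependent ((\<lambda>n. z ^ n) ` {..card B})"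
    using vs.independent_span_bound[OF assms(1)] by fastforce
  then show ?thesis
    by (rule Alg_if_dependent_powers[OF True])
qed

end

section \<open>The subalgebra generated by a set\<close>

inductive_set adjoin :: "('c::field \<Rightarrow> 'k::field) \<Rightarrow> 'k set \<Rightarrow> 'k set"
  for \<iota> :: "'c \<Rightarrow> 'k" and S :: "'k set" where
  adjoin_hom: "\<iota> c \<in> adjoin \<iota> S"
| adjoin_base: "s \<in> S \<Longrightarrow> s \<in> adjoin \<iota> S"
| adjoin_add: "x \<in> adjoin \<iota> S \<Longrightarrow> y \<in> adjoin \<iota> S \<Longrightarrow> x + y \<in> adjoin \<iota> S"
| adjoin_mult: "x \<in> adjoin \<iota> S \<Longrightarrow> y \<in> adjoin \<iota> S \<Longrightarrow> x * y \<in> adjoin \<iota> S"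

lemma adjoin_minimal:
  assumes "\<And>c. \<iota> c \<in> R" "S \<subseteq> R"
    "\<And>x y. x \<in> R \<Longrightarrow> y \<in> R \<Longrightarrow> x + y \<in> R" "\<And>x y. x \<in> R \<Longrightarrow> y \<in> R \<Longrightarrow> x * y \<in> R"
  shows "adjoin \<iota> S \<subseteq> R"
proof
  fix x
  assume "x \<in> adjoin \<iota> S"
  then show "x \<in> R"
    by (induction rule: adjoin.induct) (use assms in auto)
qed

lemma adjoin_mono: "S \<subseteq> T \<Longrightarrow> adjoin \<iota> S \<subseteq> adjoin \<iota> T"
  by (rule adjoin_minimal) (auto intro: adjoin.intros)

lemma range_subset_adjoin: "range \<iota> \<subseteq> adjoin \<iota> S"
  by (auto intro: adjoin_hom)

lemma adjoin_insert_eq: "y \<in> adjoin \<iota> S \<Longrightarrow> adjoin \<iota> (insert y S) = adjoin \<iota> S"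
  by (rule antisym[OF adjoin_minimal adjoin_mono]) (auto intro: adjoin.intros)

context field_ext
begin

lemma is_subring_adjoin: "is_subring (adjoin \<iota> S)"
proof -
  have "- x \<in> adjoin \<iota> S" if "x \<in> adjoin \<iota> S" for x
    using adjoin_mult[OF adjoin_hom[of \<iota> "- 1"] that] by simp
  then show ?thesis
    unfolding is_subring_def using adjoin_hom[of \<iota> 0] adjoin_hom[of \<iota> 1]
    by (auto intro: adjoin.intros)
qed

lemma ex_finite_span_subalgebra:
  assumes "finite S" "S \<subseteq> Alg"
  shows "\<exists>B. finite B \<and> 1 \<in> vs.span B \<and> (\<forall>u\<in>vs.span B. \<forall>v\<in>vs.span B. u * v \<in> vs.span B)
            \<and> S \<subseteq> vs.span B"
  using assms
proof (induction S)
  case empty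
  have "vs.span {1} = range \<iota>"
    by (auto simp: vs.span_singleton)
  then show ?case
    by (intro exI[of _ "{1}"]) (auto simp flip: hom_mult hom_one)
next
  case (insert b T)
  then obtain B where B: "finite B" "1 \<in> vs.span B" "\<forall>u\<in>vs.span B. \<forall>v\<in>vs.span B. u * v \<in> vs.span B"
    "T \<subseteq> vs.span B"
    by auto
  obtain d where d: "\<And>n. b ^ n \<in> vs.span ((\<lambda>i. b ^ i) ` {..<d})"
    using powers_in_span_low_powers[of b] insert by auto
  define P where "P = (\<lambda>i. b ^ i) ` {..<d}"
  define B' where "B' = (\<lambda>(a, b). a * b) ` (B \<times> P)"
  have in_B': "u * b ^ n \<in> vs.span B'" if "u \<in> vs.span B" for u n
    unfolding B'_def using mult_in_span_products[OF that d] by (simp add: P_def)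
  have "g * g' \<in> vs.span B'" if gg': "g \<in> B'" "g' \<in> B'" for g g'
  proof -
    obtain u1 u2 i j where "u1 \<in> B" "u2 \<in> B" "g = u1 * b ^ i" "g' = u2 * b ^ j"
      using gg' unfolding B'_def P_def by auto
    moreover have "u1 * b ^ i * (u2 * b ^ j) = (u1 * u2) * b ^ (i + j)"
      by (simp add: power_add algebra_simps)
    ultimately show ?thesis
      using B(3) in_B' by (metis vs.span_base)
  qed
  then have "u * v \<in> vs.span B'" if "u \<in> vs.span B'" "v \<in> vs.span B'" for u v
    using that mult_in_span[OF that(2)] mult_in_span[OF that(1), of v] by (simp add: mult.commute)
  moreover have "finite B'"
    unfolding B'_def P_def using B(1) by auto
  ultimately show ?case
    using in_B'[OF B(2), of 0] in_B'[OF B(2), of 1] in_B'[of _ 0] B(4) by (intro exI[of _ B']) auto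
qed

lemma adjoin_finite_dim:
  assumes "finite S" "S \<subseteq> Alg"
  obtains B where "finite B" "adjoin \<iota> S \<subseteq> vs.span B"
proof -
  obtain B where B: "finite B" "1 \<in> vs.span B" "\<forall>u\<in>vs.span B. \<forall>v\<in>vs.span B. u * v \<in> vs.span B"
    "S \<subseteq> vs.span B"
    using ex_finite_span_subalgebra[OF assms] by auto
  have "adjoin \<iota> S \<subseteq> vs.span B"
  proof (rule adjoin_minimal)
    show "\<iota> c \<in> vs.span B" for c
      using vs.span_scale[OF B(2), of c] by simp
  qed (use B in \<open>auto intro: vs.span_add\<close>)
  with B(1) show ?thesis
    using that by blast
qed

lemma adjoin_subset_Alg_if_finite:
  assumes "finite S" "S \<subseteq> Alg"
  shows "adjoin \<iota> S \<subseteq> Alg"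
proof
  fix z
  assume "z \<in> adjoin \<iota> S"
  then have "z ^ n \<in> adjoin \<iota> S" for n
    by (rule is_subringD(7)[OF is_subring_adjoin])
  moreover obtain B where "finite B" "adjoin \<iota> S \<subseteq> vs.span B"
    using adjoin_finite_dim[OF assms] .
  ultimately show "z \<in> Alg"
    using Alg_if_powers_in_finite_span by blast
qed

lemma Alg_add: "x \<in> Alg \<Longrightarrow> y \<in> Alg \<Longrightarrow> x + y \<in> Alg"
  and Alg_mult: "x \<in> Alg \<Longrightarrow> y \<in> Alg \<Longrightarrow> x * y \<in> Alg"
  using adjoin_subset_Alg_if_finite[of "{x, y}"] by (auto intro: adjoin.intros)

lemma adjoin_subset_Alg: "S \<subseteq> Alg \<Longrightarrow> adjoin \<iota> S \<subseteq> Alg"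
  by (rule adjoin_minimal) (use hom_in_Alg Alg_add Alg_mult in auto)

lemma is_subring_Alg: "is_subring Alg"
  using adjoin_subset_Alg[of Alg] is_subring_adjoin[of Alg] adjoin_base[of _ Alg \<iota>]
  unfolding is_subring_def by blast

section \<open>Minimal polynomials\<close>

definition min_poly :: "'k \<Rightarrow> 'c poly" where
  "min_poly x = (ARG_MIN degree p. p \<noteq> 0 \<and> poly (map_poly \<iota> p) x = 0)"

lemma
  assumes "x \<in> Alg"
  shows min_poly_nonzero: "min_poly x \<noteq> 0"
    and min_poly_root: "poly (map_poly \<iota> (min_poly x)) x = 0"
    and degree_min_poly_le: "q \<noteq> 0 \<Longrightarrow> poly (map_poly \<iota> q) x = 0 \<Longrightarrow> degree (min_poly x) \<le> degree q"
proof -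
  obtain p where "p \<noteq> 0" "poly (map_poly \<iota> p) x = 0"
    using assms unfolding rel_alg_closure_def by blast
  then show "min_poly x \<noteq> 0" "poly (map_poly \<iota> (min_poly x)) x = 0"
    "q \<noteq> 0 \<Longrightarrow> poly (map_poly \<iota> q) x = 0 \<Longrightarrow> degree (min_poly x) \<le> degree q"
    unfolding min_poly_def
    using arg_min_nat_lemma[of "\<lambda>p. p \<noteq> 0 \<and> poly (map_poly \<iota> p) x = 0" p degree]
    by blast+
qed

lemma min_poly_dvd:
  assumes "x \<in> Alg" "poly (map_poly \<iota> g) x = 0"
  shows "min_poly x dvd g"
proof (rule ccontr)
  assume not_dvd: "\<not> min_poly x dvd g"
  define r where "r = g mod min_poly x"
  have "r \<noteq> 0"
    using not_dvd unfolding r_def by (simp add: mod_eq_0_iff_dvd)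
  have "map_poly \<iota> g = map_poly \<iota> (g div min_poly x) * map_poly \<iota> (min_poly x) + map_poly \<iota> r"
    unfolding r_def by (metis div_mult_mod_eq map_poly_add map_poly_mult)
  then have "poly (map_poly \<iota> r) x = 0"
    using assms min_poly_root[OF assms(1)] by simp
  then have "degree (min_poly x) \<le> degree r"
    using degree_min_poly_le[OF assms(1) \<open>r \<noteq> 0\<close>] by simp
  then show False
    using degree_mod_less_degree[OF min_poly_nonzero[OF assms(1)] not_dvd] unfolding r_def by simp
qed

lemma coeff_0_min_poly_nonzero:
  assumes "x \<in> Alg" "x \<noteq> 0"
  shows "coeff (min_poly x) 0 \<noteq> 0"
proof
  assume "coeff (min_poly x) 0 = 0"
  then obtain q where q: "min_poly x = pCons 0 q"
    by (metis pCons_cases coeff_pCons_0)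
  with min_poly_nonzero[OF assms(1)] have "q \<noteq> 0"
    by auto
  have "x * poly (map_poly \<iota> q) x = 0"
    using q min_poly_root[OF assms(1)] by (simp add: map_poly_pCons)
  then have "degree (min_poly x) \<le> degree q"
    using degree_min_poly_le[OF assms(1) \<open>q \<noteq> 0\<close>] assms(2) by simp
  then show False
    using q \<open>q \<noteq> 0\<close> by simp
qed

end

primrec poly_of_tm :: "'c::comm_ring_1 tm \<Rightarrow> 'c poly" where
  "poly_of_tm Var = [:0, 1:]"
| "poly_of_tm (Const c) = [:c:]"
| "poly_of_tm Zero = 0"
| "poly_of_tm One = 1"
| "poly_of_tm (Add s t) = poly_of_tm s + poly_of_tm t"
| "poly_of_tm (Sub s t) = poly_of_tm s - poly_of_tm t"
| "poly_of_tm (Minus s) = - poly_of_tm s"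
| "poly_of_tm (Mul s t) = poly_of_tm s * poly_of_tm t"

primrec tm_of_coeffs :: "'c list \<Rightarrow> 'c tm" where
  "tm_of_coeffs [] = Zero"
| "tm_of_coeffs (c # cs) = Add (Const c) (Mul Var (tm_of_coeffs cs))"

definition tm_of_poly :: "'c::zero poly \<Rightarrow> 'c tm" where
  "tm_of_poly p = tm_of_coeffs (coeffs p)"

primrec qatoms :: "'c qf \<Rightarrow> ('c tm \<times> 'c tm) set" where
  "qatoms QTrue = {}"
| "qatoms QFalse = {}"
| "qatoms (QEq s t) = {(s, t)}"
| "qatoms (QNot p) = qatoms p"
| "qatoms (QAnd p q) = qatoms p \<union> qatoms q"
| "qatoms (QOr p q) = qatoms p \<union> qatoms q"
| "qatoms (QImp p q) = qatoms p \<union> qatoms q"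

lemma finite_qatoms: "finite (qatoms p)"
  by (induction p) auto

lemma qval_cong_atoms:
  assumes "\<And>s t. (s, t) \<in> qatoms p \<Longrightarrow> (tval \<iota> a s = tval \<iota> a t) = (tval \<iota>' b s = tval \<iota>' b t)"
  shows "qval \<iota> a p = qval \<iota>' b p"
  using assms by (induction p) auto

context field_ext
begin

lemma tval_closed: "tm_closed t \<Longrightarrow> tval \<iota> a t = \<iota> (tval id 0 t)"
  by (induction t) auto

lemma qval_closed: "qf_closed p \<Longrightarrow> qval \<iota> a p = qval id 0 p"
  by (induction p) (auto simp: tval_closed)

lemma tval_poly_of_tm: "tval \<iota> a t = poly (map_poly \<iota> (poly_of_tm t)) a"
  by (induction t) (auto simp: map_poly_pCons)

lemma tval_tm_of_poly: "tval \<iota> a (tm_of_poly p) = poly (map_poly \<iota> p) a"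
proof -
  have "tval \<iota> a (tm_of_coeffs cs) = poly (map_poly \<iota> (Poly cs)) a" for cs
    by (induction cs) (auto simp: map_poly_pCons)
  then show ?thesis
    by (simp add: tm_of_poly_def)
qed

end

section \<open>Transfer of existential sentences along an embedding\<close>

locale field_ext_pair = K: field_ext \<iota>K + M: field_ext \<iota>M
  for \<iota>K :: "'c::field \<Rightarrow> 'k::field" and \<iota>M :: "'c \<Rightarrow> 'm::field"
begin

lemma ring_hom_on_embedding:
  assumes "embedding_over \<iota>K \<iota>M K.Alg \<sigma>"
  shows "ring_hom_on K.Alg \<sigma>"
proof -
  have "\<sigma> 0 = 0"
    using assms unfolding embedding_over_def by (metis K.hom_zero M.hom_zero)
  with assms show ?thesis
    unfolding embedding_over_def ring_hom_on_def by auto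
qed

lemma tval_embedding:
  assumes "embedding_over \<iota>K \<iota>M K.Alg \<sigma>" "a \<in> K.Alg"
  shows "tval \<iota>K a t \<in> K.Alg \<and> tval \<iota>M (\<sigma> a) t = \<sigma> (tval \<iota>K a t)"
proof -
  note hom = ring_hom_on_embedding[OF assms(1)]
  note Alg = K.is_subring_Alg
  have "\<sigma> (\<iota>K c) = \<iota>M c" for c
    using assms(1) unfolding embedding_over_def by auto
  then show ?thesis
    by (induction t)
      (use assms(2) K.hom_in_Alg in \<open>simp_all add: ring_hom_onD[OF hom] ring_hom_on_diff[OF hom Alg]
        ring_hom_on_uminus[OF hom Alg] is_subringD[OF Alg]\<close>)
qed

lemma qval_embedding:
  assumes "embedding_over \<iota>K \<iota>M K.Alg \<sigma>" "a \<in> K.Alg"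
  shows "qval \<iota>M (\<sigma> a) p = qval \<iota>K a p"
proof (rule qval_cong_atoms)
  have "inj_on \<sigma> K.Alg"
    using assms(1) unfolding embedding_over_def by blast
  then show "(tval \<iota>M (\<sigma> a) s = tval \<iota>M (\<sigma> a) t) = (tval \<iota>K a s = tval \<iota>K a t)" for s t
    using tval_embedding[OF assms, of s] tval_embedding[OF assms, of t] by (auto dest: inj_onD)
qed

text \<open>At a transcendental point an atom holds iff its two sides are equal as polynomials.\<close>

lemma qval_transcendental:
  assumes "a \<notin> K.Alg"
    and "\<And>s t. (s, t) \<in> qatoms p \<Longrightarrow> poly_of_tm s \<noteq> poly_of_tm t \<Longrightarrow>
           poly (map_poly \<iota>M (poly_of_tm s - poly_of_tm t)) b \<noteq> 0"
  shows "qval \<iota>M b p = qval \<iota>K a p"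
proof (rule qval_cong_atoms)
  fix s t
  assume st: "(s, t) \<in> qatoms p"
  show "(tval \<iota>M b s = tval \<iota>M b t) = (tval \<iota>K a s = tval \<iota>K a t)"
  proof (cases "poly_of_tm s = poly_of_tm t")
    case False
    have "poly (map_poly \<iota>K (poly_of_tm s - poly_of_tm t)) a \<noteq> 0"
      using assms(1) False K.AlgI[of "poly_of_tm s - poly_of_tm t" a] by auto
    then show ?thesis
      using assms(2)[OF st False] by (simp add: K.tval_poly_of_tm M.tval_poly_of_tm)
  qed (simp add: K.tval_poly_of_tm M.tval_poly_of_tm)
qed

lemma ex_qval_transfer:
  assumes "embedding_over \<iota>K \<iota>M K.Alg \<sigma>"
    and "infinite (UNIV :: 'k set) \<longrightarrow> infinite (UNIV :: 'm set)"
    and "qval \<iota>K a p"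
  shows "\<exists>b. qval \<iota>M b p"
proof (cases "a \<in> K.Alg")
  case True
  then show ?thesis
    using qval_embedding[OF assms(1) True] assms(3) by blast
next
  case False
  then have "infinite (UNIV :: 'm set)"
    using assms(2) K.Alg_eq_UNIV_if_finite by blast
  define Z where "Z = (\<Union>(s, t)\<in>qatoms p. if poly_of_tm s = poly_of_tm t then {}
    else {z. poly (map_poly \<iota>M (poly_of_tm s - poly_of_tm t)) z = 0})"
  have "finite Z"
    unfolding Z_def using finite_qatoms[of p]
    by (auto intro!: poly_roots_finite simp del: M.map_poly_diff)
  then obtain b where "b \<notin> Z"
    using ex_new_if_finite[OF \<open>infinite (UNIV :: 'm set)\<close>] by blast
  then have "qval \<iota>M b p = qval \<iota>K a p"
    by (intro qval_transcendental[OF False]) (force simp: Z_def simp del: M.map_poly_diff)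
  then show ?thesis
    using assms(3) by blast
qed

lemma Th_ex1_subset_if_embedding:
  assumes "embedding_over \<iota>K \<iota>M K.Alg \<sigma>"
    and "infinite (UNIV :: 'k set) \<longrightarrow> infinite (UNIV :: 'm set)"
  shows "Th_ex1 \<iota>K \<subseteq> Th_ex1 \<iota>M"
proof -
  have "ex1_holds \<iota>M \<phi>" if "ex1_wf \<phi>" "ex1_holds \<iota>K \<phi>" for \<phi>
    using that
    by (induction \<phi>) (auto simp: K.qval_closed M.qval_closed dest: ex_qval_transfer[OF assms])
  then show ?thesis
    unfolding Th_ex1_def by blast
qed

end

lemma power_add_mult_eq_if_power_eq:
  fixes b :: "'a::monoid_mult"
  assumes "b ^ i = b ^ j" "i \<le> j"
  shows "b ^ (i + m * (j - i)) = b ^ i"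
proof (induction m)
  case (Suc m)
  have "i + Suc m * (j - i) = (i + m * (j - i)) + (j - i)"
    by simp
  then have "b ^ (i + Suc m * (j - i)) = b ^ (i + m * (j - i)) * b ^ (j - i)"
    by (simp only: power_add)
  also have "\<dots> = b ^ j"
    using Suc.IH assms(2) by (simp add: power_add[symmetric])
  finally show ?case
    using assms(1) by simp
qed simp

lemma power_card_add_fact_eq:
  fixes b :: "'a::monoid_mult"
  assumes "finite (UNIV :: 'a set)"
  defines "n \<equiv> card (UNIV :: 'a set)"
  shows "b ^ (n + fact n) = b ^ n"
proof -
  have "\<not> inj_on (\<lambda>k. b ^ k) {..n}"
    using card_inj_on_le[of "\<lambda>k. b ^ k" "{..n}" UNIV] assms by auto
  then obtain i j where ij: "i < j" "j \<le> n" "b ^ i = b ^ j"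
    unfolding inj_on_def by (metis atMost_iff linorder_neqE_nat)
  have "(j - i) dvd fact n"
    using ij by (intro dvd_fact) auto
  then obtain m where m: "fact n = m * (j - i)"
    by (metis dvd_def mult.commute)
  have "b ^ (n + fact n) = b ^ (n - i) * b ^ (i + m * (j - i))"
    using ij by (simp flip: power_add m)
  also have "\<dots> = b ^ (n - i) * b ^ i"
    using ij(1,3) by (simp add: power_add_mult_eq_if_power_eq)
  also have "\<dots> = b ^ n"
    using ij(1,2) by (simp flip: power_add)
  finally show ?thesis .
qed

lemma ex_power_neq_if_infinite:
  assumes "infinite (UNIV :: 'a::field set)" "N \<noteq> n"
  shows "\<exists>a::'a. a ^ N \<noteq> a ^ n"
proof -
  have "coeff (monom (1::'a) N - monom 1 n) N \<noteq> 0"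
    using assms(2) by simp
  then have "monom (1::'a) N - monom 1 n \<noteq> 0"
    by (metis coeff_0)
  then have "finite {a. poly (monom (1::'a) N - monom 1 n) a = 0}"
    by (rule poly_roots_finite)
  then obtain a where "poly (monom (1::'a) N - monom 1 n) a \<noteq> 0"
    using ex_new_if_finite[OF assms(1)] by blast
  then show ?thesis
    by (auto simp: poly_monom)
qed

lemma (in field_ext_pair) infinite_if_Th_ex1_subset:
  assumes "Th_ex1 \<iota>K \<subseteq> Th_ex1 \<iota>M" "infinite (UNIV :: 'k set)"
  shows "infinite (UNIV :: 'm set)"
proof
  assume finite: "finite (UNIV :: 'm set)"
  define n where "n = card (UNIV :: 'm set)"
  define \<phi> :: "'c ex1" where
    "\<phi> = ExS (QNot (QEq (tm_of_poly (monom 1 (n + fact n))) (tm_of_poly (monom 1 n))))"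
  have "\<phi> \<in> Th_ex1 \<iota>K"
    using ex_power_neq_if_infinite[OF assms(2), of "n + fact n" n]
    by (simp add: \<phi>_def Th_ex1_def K.tval_tm_of_poly map_poly_monom poly_monom)
  with assms(1) have "\<phi> \<in> Th_ex1 \<iota>M"
    by blast
  then show False
    using power_card_add_fact_eq[OF finite]
    by (simp add: \<phi>_def Th_ex1_def M.tval_tm_of_poly map_poly_monom poly_monom n_def)
qed

section \<open>Homomorphisms over the base field\<close>

text \<open>Pseudo-division by \<open>m\<close> turns a polynomial \<open>g\<close> over \<open>R\<close> vanishing at \<open>b\<close> into one of smaller
  degree, and the leading coefficient of \<open>m\<close> is not killed by \<open>\<phi>\<close>.\<close>

lemma poly_map_poly_eq_0_if_min_degree:
  fixes \<phi> :: "'k::comm_ring_1 \<Rightarrow> 'm::idom"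
  assumes hom: "ring_hom_on R \<phi>" "is_subring R"
    and nonzero: "\<And>x. x \<in> R \<Longrightarrow> x \<noteq> 0 \<Longrightarrow> \<phi> x \<noteq> 0"
    and m: "poly_over R m" "m \<noteq> 0" "poly m b = 0"
    and min: "\<And>g. poly_over R g \<Longrightarrow> g \<noteq> 0 \<Longrightarrow> poly g b = 0 \<Longrightarrow> degree m \<le> degree g"
    and w: "poly (map_poly \<phi> m) w = 0"
    and g: "poly_over R g" "poly g b = 0"
  shows "poly (map_poly \<phi> g) w = 0"
  using g
proof (induction "degree g" arbitrary: g rule: less_induct)
  case less
  show ?case
  proof (cases "g = 0")
    case False
    define k where "k = degree g - degree m"
    define lc where "lc = lead_coeff m"
    define lg where "lg = lead_coeff g"
    define g' where "g' = [:lc:] * g - monom lg k * m"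
    have lc: "lc \<in> R" "lc \<noteq> 0" and lg: "lg \<in> R"
      using m less.prems unfolding lc_def lg_def poly_over_def by auto
    have over: "poly_over R ([:lc:] * g)" "poly_over R (monom lg k * m)"
      using poly_over_mult[OF hom(2) poly_over_const[OF hom(2) lc(1)] less.prems(1)]
        poly_over_mult[OF hom(2) poly_over_monom[OF hom(2) lg] m(1)] by blast+
    have "degree g' < degree g"
      unfolding g'_def k_def lc_def lg_def
      using degree_pos_if_poly_eq_0[OF m(2,3)] min less.prems False
      by (intro degree_pseudo_reduce_less)
    moreover have "poly_over R g'" "poly g' b = 0"
      using over less.prems m unfolding g'_def by (auto intro: poly_over_diff hom(2))
    ultimately have "poly (map_poly \<phi> g') w = 0"
      using less.hyps by blast
    moreover have "map_poly \<phi> ([:lc:] * g) = [:\<phi> lc:] * map_poly \<phi> g"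
      using map_poly_mult_on[OF hom poly_over_const[OF hom(2) lc(1)] less.prems(1)]
      by (simp add: map_poly_pCons ring_hom_onD(1)[OF hom(1)])
    moreover have "map_poly \<phi> (monom lg k * m) = monom (\<phi> lg) k * map_poly \<phi> m"
      using map_poly_mult_on[OF hom poly_over_monom[OF hom(2) lg] m(1)]
      by (simp add: map_poly_monom ring_hom_onD(1)[OF hom(1)])
    ultimately have "\<phi> lc * poly (map_poly \<phi> g) w = 0"
      using w map_poly_diff_on[OF hom over] unfolding g'_def by simp
    then show ?thesis
      using nonzero lc by simp
  qed simp
qed

lemma (in field_ext) adjoin_insert_eq_polys:
  "adjoin \<iota> (insert b T) = {poly g b | g. poly_over (adjoin \<iota> T) g}"
proof
  note R = is_subring_adjoin[of T]
  show "adjoin \<iota> (insert b T) \<subseteq> {poly g b | g. poly_over (adjoin \<iota> T) g}"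
  proof (rule adjoin_minimal)
    show "\<iota> c \<in> {poly g b | g. poly_over (adjoin \<iota> T) g}" for c
      by (auto intro!: exI[of _ "[:\<iota> c:]"] poly_over_const R adjoin_hom)
    have "b \<in> {poly g b | g. poly_over (adjoin \<iota> T) g}"
      by (auto intro!: exI[of _ "[:0, 1:]"] poly_over_X R)
    moreover have "s \<in> {poly g b | g. poly_over (adjoin \<iota> T) g}" if "s \<in> T" for s
      using that by (auto intro!: exI[of _ "[:s:]"] poly_over_const R adjoin_base)
    ultimately show "insert b T \<subseteq> {poly g b | g. poly_over (adjoin \<iota> T) g}"
      by blast
  next
    fix u v
    assume "u \<in> {poly g b | g. poly_over (adjoin \<iota> T) g}"
      and "v \<in> {poly g b | g. poly_over (adjoin \<iota> T) g}"
    then obtain g h where gh: "u = poly g b" "v = poly h b" "poly_over (adjoin \<iota> T) g"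
      "poly_over (adjoin \<iota> T) h"
      by blast
    then show "u + v \<in> {poly g b | g. poly_over (adjoin \<iota> T) g}"
      by (auto intro!: exI[of _ "g + h"] poly_over_add R)
    show "u * v \<in> {poly g b | g. poly_over (adjoin \<iota> T) g}"
      using gh by (auto intro!: exI[of _ "g * h"] poly_over_mult R)
  qed
  have "poly g b \<in> adjoin \<iota> (insert b T)" if "poly_over (adjoin \<iota> T) g" for g
  proof (rule poly_in_subring[OF is_subring_adjoin])
    show "poly_over (adjoin \<iota> (insert b T)) g"
      using that adjoin_mono[of T "insert b T" \<iota>] by (auto simp: poly_over_def)
  qed (simp add: adjoin_base)
  then show "{poly g b | g. poly_over (adjoin \<iota> T) g} \<subseteq> adjoin \<iota> (insert b T)"
    by blast
qed

lemma (in field_ext) adjoin_empty: "adjoin \<iota> {} = range \<iota>"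
proof
  show "adjoin \<iota> {} \<subseteq> range \<iota>"
    by (rule adjoin_minimal) (auto simp flip: hom_add hom_mult)
qed (rule range_subset_adjoin)

definition hom_over :: "('c \<Rightarrow> 'k::field) \<Rightarrow> ('c \<Rightarrow> 'm::field) \<Rightarrow> 'k set \<Rightarrow> ('k \<Rightarrow> 'm) \<Rightarrow> bool" where
  "hom_over \<iota>K \<iota>M R \<phi> \<longleftrightarrow>
     (\<forall>x\<in>R. \<forall>y\<in>R. \<phi> (x + y) = \<phi> x + \<phi> y \<and> \<phi> (x * y) = \<phi> x * \<phi> y) \<and> (\<forall>c. \<phi> (\<iota>K c) = \<iota>M c)"

context field_ext_pair
begin

lemma ring_hom_on_hom_over:
  assumes "hom_over \<iota>K \<iota>M R \<phi>"
  shows "ring_hom_on R \<phi>"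
proof -
  have "\<phi> 0 = 0" "\<phi> 1 = 1"
    using assms unfolding hom_over_def by (metis K.hom_zero M.hom_zero K.hom_one M.hom_one)+
  with assms show ?thesis
    unfolding hom_over_def ring_hom_on_def by auto
qed

lemma hom_over_restrict:
  "hom_over \<iota>K \<iota>M (adjoin \<iota>K S) \<phi> \<Longrightarrow> hom_over \<iota>K \<iota>M (adjoin \<iota>K S) (restrict \<phi> (adjoin \<iota>K S))"
  unfolding hom_over_def by (auto intro: adjoin.intros)

lemma hom_over_poly:
  assumes "hom_over \<iota>K \<iota>M (adjoin \<iota>K S) \<phi>" "x \<in> adjoin \<iota>K S"
  shows "\<phi> (poly (map_poly \<iota>K p) x) = poly (map_poly \<iota>M p) (\<phi> x)"
proof -
  note hom = ring_hom_on_hom_over[OF assms(1)]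
  have "\<phi> (poly (map_poly \<iota>K p) x) = poly (map_poly \<phi> (map_poly \<iota>K p)) (\<phi> x)"
    using assms(2) by (intro ring_hom_on_poly[OF hom K.is_subring_adjoin])
      (auto simp: poly_over_def coeff_map_poly intro: adjoin_hom)
  also have "map_poly \<phi> (map_poly \<iota>K p) = map_poly \<iota>M p"
    using assms(1) ring_hom_onD(1)[OF hom]
    by (subst map_poly_map_poly) (auto simp: hom_over_def o_def)
  finally show ?thesis .
qed

definition conjugates :: "'k \<Rightarrow> 'm set" where
  "conjugates x = {z. poly (map_poly \<iota>M (K.min_poly x)) z = 0}"

lemma finite_conjugates: "x \<in> K.Alg \<Longrightarrow> finite (conjugates x)"
  unfolding conjugates_def using K.min_poly_nonzero by (intro poly_roots_finite) simp

lemma hom_over_in_conjugates: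
  assumes "hom_over \<iota>K \<iota>M (adjoin \<iota>K S) \<phi>" "x \<in> adjoin \<iota>K S" "x \<in> K.Alg"
  shows "\<phi> x \<in> conjugates x"
  using hom_over_poly[OF assms(1,2), of "K.min_poly x"] K.min_poly_root[OF assms(3)]
    ring_hom_onD(1)[OF ring_hom_on_hom_over[OF assms(1)]]
  by (simp add: conjugates_def)

lemma hom_over_nonzero:
  assumes "hom_over \<iota>K \<iota>M (adjoin \<iota>K S) \<phi>" "S \<subseteq> K.Alg" "x \<in> adjoin \<iota>K S" "x \<noteq> 0"
  shows "\<phi> x \<noteq> 0"
proof
  assume "\<phi> x = 0"
  have "x \<in> K.Alg"
    using K.adjoin_subset_Alg assms(2,3) by blast
  then have "\<iota>M (coeff (K.min_poly x) 0) = 0"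
    using hom_over_in_conjugates[OF assms(1,3)] \<open>\<phi> x = 0\<close>
    by (simp add: conjugates_def poly_0_coeff_0 coeff_map_poly)
  then show False
    using K.coeff_0_min_poly_nonzero[OF \<open>x \<in> K.Alg\<close> assms(4)] by simp
qed

lemma inj_on_hom_over:
  assumes "hom_over \<iota>K \<iota>M (adjoin \<iota>K S) \<phi>" "S \<subseteq> K.Alg"
  shows "inj_on \<phi> (adjoin \<iota>K S)"
proof (rule inj_onI)
  fix x y
  assume xy: "x \<in> adjoin \<iota>K S" "y \<in> adjoin \<iota>K S" "\<phi> x = \<phi> y"
  then have "\<phi> (x - y) = 0"
    using ring_hom_on_diff[OF ring_hom_on_hom_over[OF assms(1)] K.is_subring_adjoin] by simp
  then show "x = y"
    using hom_over_nonzero[OF assms, of "x - y"] is_subringD(6)[OF K.is_subring_adjoin xy(1,2)]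
    by auto
qed

lemma hom_over_eqI:
  assumes "hom_over \<iota>K \<iota>M (adjoin \<iota>K S) \<phi>" "hom_over \<iota>K \<iota>M (adjoin \<iota>K S) \<psi>"
    and "\<And>s. s \<in> S \<Longrightarrow> \<phi> s = \<psi> s" "x \<in> adjoin \<iota>K S"
  shows "\<phi> x = \<psi> x"
  using assms(4) by (induction rule: adjoin.induct) (use assms(1-3) in \<open>auto simp: hom_over_def\<close>)

lemma hom_over_extend:
  assumes hom: "hom_over \<iota>K \<iota>M (adjoin \<iota>K T) \<phi>"
    and kernel: "\<And>g. poly_over (adjoin \<iota>K T) g \<Longrightarrow> poly g b = 0 \<Longrightarrow> poly (map_poly \<phi> g) w = 0"
  obtains \<phi>' where "hom_over \<iota>K \<iota>M (adjoin \<iota>K (insert b T)) \<phi>'" "\<phi>' b = w"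
    "\<And>x. x \<in> adjoin \<iota>K T \<Longrightarrow> \<phi>' x = \<phi> x"
proof -
  define R where "R = adjoin \<iota>K T"
  note R = K.is_subring_adjoin[of T, folded R_def]
  note hom_on = ring_hom_on_hom_over[OF hom, folded R_def]
  have map_const: "map_poly \<phi> [:c:] = [:\<phi> c:]" for c
    using ring_hom_onD(1)[OF hom_on] by (simp add: map_poly_pCons)
  have well_defined: "poly (map_poly \<phi> g) w = poly (map_poly \<phi> h) w"
    if "poly_over R g" "poly_over R h" "poly g b = poly h b" for g h
    using kernel[of "g - h", folded R_def] that map_poly_diff_on[OF hom_on R that(1,2)]
    by (simp add: poly_over_diff[OF R])
  define \<phi>' where "\<phi>' v = poly (map_poly \<phi> (SOME g. poly_over R g \<and> v = poly g b)) w" for v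
  have \<phi>': "\<phi>' (poly g b) = poly (map_poly \<phi> g) w" if "poly_over R g" for g
  proof -
    have "poly_over R (SOME h. poly_over R h \<and> poly g b = poly h b) \<and>
          poly g b = poly (SOME h. poly_over R h \<and> poly g b = poly h b) b"
      by (rule someI[of _ g]) (simp add: that)
    then show ?thesis
      unfolding \<phi>'_def using well_defined[OF that] by metis
  qed
  have "hom_over \<iota>K \<iota>M (adjoin \<iota>K (insert b T)) \<phi>'"
    unfolding hom_over_def K.adjoin_insert_eq_polys R_def[symmetric]
  proof (intro conjI ballI allI)
    fix u v
    assume "u \<in> {poly g b | g. poly_over R g}" "v \<in> {poly g b | g. poly_over R g}"
    then obtain g h where gh: "u = poly g b" "v = poly h b" "poly_over R g" "poly_over R h"
      by blast
    show "\<phi>' (u + v) = \<phi>' u + \<phi>' v"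
      using \<phi>'[OF poly_over_add[OF R gh(3,4)]]
      by (simp add: gh \<phi>' map_poly_add_on[OF hom_on gh(3,4)])
    show "\<phi>' (u * v) = \<phi>' u * \<phi>' v"
      using \<phi>'[OF poly_over_mult[OF R gh(3,4)]]
      by (simp add: gh \<phi>' map_poly_mult_on[OF hom_on R gh(3,4)])
  next
    fix c
    show "\<phi>' (\<iota>K c) = \<iota>M c"
      using \<phi>'[OF poly_over_const[OF R], of "\<iota>K c"] hom
      by (simp add: map_const R_def adjoin_hom hom_over_def)
  qed
  moreover have "\<phi>' b = w"
    using \<phi>'[OF poly_over_X[OF R]] ring_hom_onD(1,2)[OF hom_on] by (simp add: map_poly_pCons)
  moreover have "\<phi>' x = \<phi> x" if "x \<in> adjoin \<iota>K T" for x
    using \<phi>'[OF poly_over_const[OF R], of x] that by (simp add: map_const R_def)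
  ultimately show ?thesis
    using that by blast
qed

lemma hom_over_adjoin_singleton:
  assumes "x \<in> K.Alg" "poly (map_poly \<iota>M (K.min_poly x)) z = 0"
  obtains \<psi> where "hom_over \<iota>K \<iota>M (adjoin \<iota>K {x}) \<psi>" "\<psi> x = z"
proof -
  define \<phi> where "\<phi> = \<iota>M \<circ> inv_into UNIV \<iota>K"
  have inj: "inj \<iota>K"
    by (rule injI) simp
  have inv_0: "inv_into UNIV \<iota>K 0 = 0"
    using inv_f_f[OF inj, of 0] by simp
  have "hom_over \<iota>K \<iota>M (adjoin \<iota>K {}) \<phi>"
    unfolding hom_over_def K.adjoin_empty \<phi>_def
    by (auto simp flip: K.hom_add K.hom_mult simp: inv_f_f[OF inj])
  moreover have "poly (map_poly \<phi> g) z = 0"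
    if "poly_over (adjoin \<iota>K {}) g" "poly g x = 0" for g
  proof -
    define h where "h = map_poly (inv_into UNIV \<iota>K) g"
    have "set (coeffs g) \<subseteq> range \<iota>K"
    proof
      fix c
      assume "c \<in> set (coeffs g)"
      then have "c \<in> range (coeff g)"
        by (simp add: range_coeff)
      then show "c \<in> range \<iota>K"
        using that(1) unfolding K.adjoin_empty poly_over_def by auto
    qed
    then have "map_poly \<iota>K h = g"
      unfolding h_def
      by (subst map_poly_map_poly) (auto simp: inv_0 f_inv_into_f intro!: map_poly_idI)
    then have "K.min_poly x dvd h"
      using that(2) by (intro K.min_poly_dvd[OF assms(1)]) simp
    then have "poly (map_poly \<iota>M h) z = 0"
      using assms(2) by (auto elim!: dvdE)
    moreover have "map_poly \<phi> g = map_poly \<iota>M h"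
      unfolding h_def \<phi>_def by (subst map_poly_map_poly) (simp_all add: inv_0)
    ultimately show ?thesis
      by simp
  qed
  ultimately show ?thesis
    using hom_over_extend[of "{}" \<phi> x z] that by blast
qed

end

lemma hom_over_extend_alg_closed:
  fixes \<iota>K :: "'c::field \<Rightarrow> 'k::field" and \<iota>M :: "'c \<Rightarrow> 'm::alg_closed_field"
  assumes "field_ext_pair \<iota>K \<iota>M" "hom_over \<iota>K \<iota>M (adjoin \<iota>K T) \<phi>"
    and "T \<subseteq> rel_alg_closure \<iota>K" "b \<in> rel_alg_closure \<iota>K"
  obtains \<phi>' where "hom_over \<iota>K \<iota>M (adjoin \<iota>K (insert b T)) \<phi>'"
    "\<And>x. x \<in> adjoin \<iota>K T \<Longrightarrow> \<phi>' x = \<phi> x"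
proof -
  interpret field_ext_pair \<iota>K \<iota>M
    by fact
  define R where "R = adjoin \<iota>K T"
  note R = K.is_subring_adjoin[of T, folded R_def]
  note hom_on = ring_hom_on_hom_over[OF assms(2), folded R_def]
  have nonzero: "\<phi> x \<noteq> 0" if "x \<in> R" "x \<noteq> 0" for x
    using hom_over_nonzero[OF assms(2,3)] that unfolding R_def by blast
  define P where "P g \<longleftrightarrow> poly_over R g \<and> g \<noteq> 0 \<and> poly g b = 0" for g
  have "P (map_poly \<iota>K (K.min_poly b))"
    using K.min_poly_nonzero[OF assms(4)] K.min_poly_root[OF assms(4)]
    by (auto simp: P_def poly_over_def coeff_map_poly R_def intro: adjoin_hom)
  then obtain m where m: "P m" and min: "\<And>g. P g \<Longrightarrow> degree m \<le> degree g"
    using ex_has_least_nat[of P _ degree] by blast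
  have "degree (map_poly \<phi> m) = degree m"
    using m nonzero by (intro map_poly_degree_eq) (auto simp: P_def poly_over_def)
  moreover have "degree m \<noteq> 0"
    using degree_pos_if_poly_eq_0[of m b] m unfolding P_def by simp
  ultimately obtain w where "poly (map_poly \<phi> m) w = 0"
    using alg_closed_imp_poly_has_root[of "map_poly \<phi> m"] by auto
  then have "poly (map_poly \<phi> g) w = 0" if "poly_over R g" "poly g b = 0" for g
    using poly_map_poly_eq_0_if_min_degree[OF hom_on R nonzero, of m b] m min that
    unfolding P_def by blast
  then show ?thesis
    using hom_over_extend[OF assms(2), of b w] that unfolding R_def by blast
qed

lemma hom_over_extend_alg_closed_finite:
  fixes \<iota>K :: "'c::field \<Rightarrow> 'k::field" and \<iota>M :: "'c \<Rightarrow> 'm::alg_closed_field"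
  assumes "field_ext_pair \<iota>K \<iota>M" "finite S" "S \<subseteq> rel_alg_closure \<iota>K"
    and "hom_over \<iota>K \<iota>M (adjoin \<iota>K T) \<phi>" "T \<subseteq> rel_alg_closure \<iota>K"
  obtains \<phi>' where "hom_over \<iota>K \<iota>M (adjoin \<iota>K (S \<union> T)) \<phi>'"
    "\<And>x. x \<in> adjoin \<iota>K T \<Longrightarrow> \<phi>' x = \<phi> x"
proof -
  have "\<exists>\<phi>'. hom_over \<iota>K \<iota>M (adjoin \<iota>K (S \<union> T)) \<phi>' \<and> (\<forall>x\<in>adjoin \<iota>K T. \<phi>' x = \<phi> x)"
    using assms(2,3)
  proof (induction S)
    case (insert b S)
    then obtain \<phi>1 where \<phi>1: "hom_over \<iota>K \<iota>M (adjoin \<iota>K (S \<union> T)) \<phi>1" "\<forall>x\<in>adjoin \<iota>K T. \<phi>1 x = \<phi> x"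
      by auto
    obtain \<phi>2 where "hom_over \<iota>K \<iota>M (adjoin \<iota>K (insert b (S \<union> T))) \<phi>2"
      "\<And>x. x \<in> adjoin \<iota>K (S \<union> T) \<Longrightarrow> \<phi>2 x = \<phi>1 x"
      using hom_over_extend_alg_closed[OF assms(1) \<phi>1(1)] insert assms(5) by blast
    moreover have "adjoin \<iota>K T \<subseteq> adjoin \<iota>K (S \<union> T)"
      by (rule adjoin_mono) auto
    ultimately show ?case
      using \<phi>1(2) by (intro exI[of _ \<phi>2]) auto
  qed (use assms(4) in auto)
  then show ?thesis
    using that by blast
qed

context field_ext_pair
begin

lemma finite_hom_over:
  assumes "finite S" "S \<subseteq> K.Alg"
  shows "finite ((\<lambda>\<phi>. restrict \<phi> (adjoin \<iota>K S)) ` {\<phi>. hom_over \<iota>K \<iota>M (adjoin \<iota>K S) \<phi>})"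
    (is "finite ?H")
proof -
  have "restrict (restrict \<phi> (adjoin \<iota>K S)) S \<in> PiE S conjugates"
    if "hom_over \<iota>K \<iota>M (adjoin \<iota>K S) \<phi>" for \<phi>
    unfolding restrict_PiE_iff using assms(2) adjoin_base[of _ S \<iota>K]
    by (auto intro!: hom_over_in_conjugates[OF that])
  then have "(\<lambda>f. restrict f S) ` ?H \<subseteq> PiE S conjugates"
    by blast
  moreover have "finite (PiE S conjugates)"
    using assms finite_conjugates by (intro finite_PiE) auto
  ultimately have "finite ((\<lambda>f. restrict f S) ` ?H)"
    by (rule finite_subset)
  moreover have "inj_on (\<lambda>f. restrict f S) ?H"
  proof (rule inj_onI, clarify)
    fix \<phi> \<psi>
    assume hom: "hom_over \<iota>K \<iota>M (adjoin \<iota>K S) \<phi>" "hom_over \<iota>K \<iota>M (adjoin \<iota>K S) \<psi>"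
      and eq: "restrict (restrict \<phi> (adjoin \<iota>K S)) S = restrict (restrict \<psi> (adjoin \<iota>K S)) S"
    have "\<phi> s = \<psi> s" if "s \<in> S" for s
      using fun_cong[OF eq, of s] that adjoin_base[OF that, of \<iota>K] by simp
    then show "restrict \<phi> (adjoin \<iota>K S) = restrict \<psi> (adjoin \<iota>K S)"
      using hom_over_eqI[OF hom] by auto
  qed
  ultimately show ?thesis
    using finite_imageD by blast
qed

end

section \<open>Homomorphisms of finitely generated subalgebras\<close>

lemma (in field_ext_pair) min_poly_has_root_if_Th_ex1_subset:
  assumes "Th_ex1 \<iota>K \<subseteq> Th_ex1 \<iota>M" "y \<in> K.Alg"
  obtains z where "poly (map_poly \<iota>M (K.min_poly y)) z = 0"
proof -
  define \<phi> :: "'c ex1" where "\<phi> = ExS (QEq (tm_of_poly (K.min_poly y)) Zero)"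
  have "\<phi> \<in> Th_ex1 \<iota>K"
    using K.min_poly_root[OF assms(2)] by (auto simp: \<phi>_def Th_ex1_def K.tval_tm_of_poly)
  with assms(1) have "\<phi> \<in> Th_ex1 \<iota>M"
    by blast
  then show ?thesis
    using that by (auto simp: \<phi>_def Th_ex1_def M.tval_tm_of_poly)
qed

lemma inverse_in_finite_subring:
  fixes W :: "'k::field set"
  assumes "finite W" "is_subring W" "x \<in> W" "x \<noteq> 0"
  shows "inverse x \<in> W"
proof -
  have "(\<lambda>u. x * u) ` W \<subseteq> W"
    using is_subringD(4)[OF assms(2,3)] by auto
  moreover have "inj_on (\<lambda>u. x * u) W"
    using assms(4) by (auto intro: inj_onI)
  ultimately have "(\<lambda>u. x * u) ` W = W"
    using endo_inj_surj[OF assms(1)] by blast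
  then obtain u where "u \<in> W" "x * u = 1"
    using is_subringD(2)[OF assms(2)] by (metis imageE)
  then show ?thesis
    using inverse_unique by blast
qed

lemma finite_subring_cyclic:
  fixes W :: "'k::field set"
  assumes "finite W" "is_subring W"
  obtains y where "y \<in> W" "\<And>x. x \<in> W \<Longrightarrow> x \<noteq> 0 \<Longrightarrow> \<exists>i. x = y ^ i"
proof -
  define R where "R = (ring_of_type_algebra :: 'k ring)"
  interpret R: field R
    unfolding R_def by (rule field_from_type_algebra)
  have carrier: "carrier R = UNIV"
    and ops: "(\<otimes>\<^bsub>R\<^esub>) = (*)" "(\<oplus>\<^bsub>R\<^esub>) = (+)" "\<one>\<^bsub>R\<^esub> = 1" "\<zero>\<^bsub>R\<^esub> = 0"
    by (simp_all add: R_def ring_of_type_algebra_def)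
  have "\<ominus>\<^bsub>R\<^esub> x = - x" for x
    using R.add.inv_equality[of "- x" x] by (simp add: carrier ops)
  then have "subring W R"
    by (intro R.subringI) (use assms(2) in \<open>auto simp: carrier ops is_subringD\<close>)
  moreover have "inv\<^bsub>R\<^esub> x = inverse x" if "x \<noteq> 0" for x
    using R.comm_inv_char[of x "inverse x"] that by (simp add: carrier ops)
  ultimately have "subfield W R"
    by (intro R.subfieldI') (use assms inverse_in_finite_subring in \<open>auto simp: ops\<close>)
  then have "field (R\<lparr>carrier := W\<rparr>)"
    by (rule R.subfield_iff(2))
  from field.finite_field_mult_group_has_gen[OF this] assms(1)
  obtain a where a: "a \<in> W - {0}" "W - {0} = {a [^]\<^bsub>R\<lparr>carrier := W\<rparr>\<^esub> i | i::nat. i \<in> UNIV}"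
    by (auto simp: ops)
  have "a [^]\<^bsub>R\<lparr>carrier := W\<rparr>\<^esub> (i::nat) = a ^ i" for i
    by (induction i) (simp_all add: ops mult.commute)
  with a show ?thesis
    using that by auto
qed

context field_ext
begin

lemma finite_adjoin_if_finite_base:
  assumes "finite (UNIV :: 'c set)" "finite S" "S \<subseteq> Alg"
  shows "finite (adjoin \<iota> S)"
proof -
  obtain B where B: "finite B" "adjoin \<iota> S \<subseteq> vs.span B"
    using adjoin_finite_dim[OF assms(2,3)] .
  have "vs.span B \<subseteq> (\<lambda>u. \<Sum>v\<in>B. \<iota> (u v) * v) ` PiE B (\<lambda>_. UNIV)"
  proof
    fix x
    assume "x \<in> vs.span B"
    then obtain u where "x = (\<Sum>v\<in>B. \<iota> (u v) * v)"
      using vs.span_finite[OF B(1)] by auto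
    also have "\<dots> = (\<Sum>v\<in>B. \<iota> (restrict u B v) * v)"
      by simp
    finally show "x \<in> (\<lambda>u. \<Sum>v\<in>B. \<iota> (u v) * v) ` PiE B (\<lambda>_. UNIV)"
      by (rule image_eqI[where x = "restrict u B"]) simp
  qed
  moreover have "finite ((\<lambda>u. \<Sum>v\<in>B. \<iota> (u v) * v) ` PiE B (\<lambda>_. UNIV :: 'c set))"
    using assms(1) B(1) by (intro finite_imageI finite_PiE) auto
  ultimately have "finite (vs.span B)"
    by (rule finite_subset)
  then show ?thesis
    by (rule finite_subset[OF B(2)])
qed

lemma adjoin_eq_adjoin_singleton_if_finite_base:
  assumes "finite (UNIV :: 'c set)" "finite S" "S \<subseteq> Alg"
  obtains y where "y \<in> adjoin \<iota> S" "adjoin \<iota> S = adjoin \<iota> {y}"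
proof -
  obtain y where y: "y \<in> adjoin \<iota> S" "\<And>x. x \<in> adjoin \<iota> S \<Longrightarrow> x \<noteq> 0 \<Longrightarrow> \<exists>i. x = y ^ i"
    using finite_subring_cyclic[OF finite_adjoin_if_finite_base[OF assms] is_subring_adjoin]
    by blast
  have "adjoin \<iota> S \<subseteq> adjoin \<iota> {y}"
  proof
    fix x
    assume x: "x \<in> adjoin \<iota> S"
    have "y ^ i \<in> adjoin \<iota> {y}" for i
      by (intro is_subringD(7)[OF is_subring_adjoin] adjoin_base) simp
    then show "x \<in> adjoin \<iota> {y}"
      using y(2)[OF x] adjoin_hom[of \<iota> 0 "{y}"] by (cases "x = 0") auto
  qed
  moreover have "adjoin \<iota> {y} \<subseteq> adjoin \<iota> S"
    by (rule adjoin_minimal) (use y(1) in \<open>auto intro: adjoin.intros\<close>)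
  ultimately show ?thesis
    using y(1) that by blast
qed

end

lemma (in field_ext_pair) ex_hom_over_adjoin_finite_base:
  assumes "finite (UNIV :: 'c set)" "Th_ex1 \<iota>K \<subseteq> Th_ex1 \<iota>M" "finite S" "S \<subseteq> K.Alg"
  obtains \<psi> where "hom_over \<iota>K \<iota>M (adjoin \<iota>K S) \<psi>"
proof -
  obtain y where y: "y \<in> adjoin \<iota>K S" "adjoin \<iota>K S = adjoin \<iota>K {y}"
    using K.adjoin_eq_adjoin_singleton_if_finite_base[OF assms(1,3,4)] .
  then have "y \<in> K.Alg"
    using K.adjoin_subset_Alg[OF assms(4)] by blast
  then obtain z where "poly (map_poly \<iota>M (K.min_poly y)) z = 0"
    using min_poly_has_root_if_Th_ex1_subset[OF assms(2)] by blast
  then obtain \<psi> where "hom_over \<iota>K \<iota>M (adjoin \<iota>K {y}) \<psi>"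
    using hom_over_adjoin_singleton[OF \<open>y \<in> K.Alg\<close>] by blast
  with y(2) show ?thesis
    using that by simp
qed

context field_ext
begin

lemma subspace_adjoin: "vs.subspace (adjoin \<iota> S)"
  unfolding vs.subspace_def using adjoin_hom[of \<iota> 0 S] by (auto intro: adjoin.intros)

lemma line_subspace_inter_subset:
  assumes "vs.subspace V" "x \<notin> V" "y + \<iota> c0 * x \<in> V"
  shows "{c. y + \<iota> c * x \<in> V} \<subseteq> {c0}"
proof
  fix c
  assume "c \<in> {c. y + \<iota> c * x \<in> V}"
  moreover have "\<iota> (- 1) * (y + \<iota> c0 * x) \<in> V"
    using vs.subspace_scale[OF assms(1,3)] .
  ultimately have "(y + \<iota> c * x) + \<iota> (- 1) * (y + \<iota> c0 * x) \<in> V"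
    using vs.subspace_add[OF assms(1)] by blast
  then have "\<iota> (c - c0) * x \<in> V"
    by (simp add: algebra_simps)
  then have "\<iota> (inverse (c - c0)) * (\<iota> (c - c0) * x) \<in> V"
    by (rule vs.subspace_scale[OF assms(1)])
  moreover have "\<iota> (inverse (c - c0)) * (\<iota> (c - c0) * x) = \<iota> (inverse (c - c0) * (c - c0)) * x"
    by (simp only: hom_mult mult.assoc)
  ultimately have "\<iota> (inverse (c - c0) * (c - c0)) * x \<in> V"
    by (simp only:)
  then show "c \<in> {c0}"
    using assms(2) by (cases "c = c0") (auto simp del: hom_mult hom_inverse hom_diff)
qed

lemma finite_line_subspace_inter:
  assumes "vs.subspace V" "x \<notin> V"
  shows "finite {c. y + \<iota> c * x \<in> V}"
proof (cases "\<exists>c0. y + \<iota> c0 * x \<in> V")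
  case True
  then show ?thesis
    using line_subspace_inter_subset[OF assms] finite_subset by blast
qed simp

text \<open>If \<open>x \<in> V\<close> avoids the other subspaces and \<open>y \<notin> V\<close>, no point \<open>y + c x\<close> of the line lies in \<open>V\<close>,
  and all but finitely many of them avoid the others.\<close>

lemma ex_not_in_finite_union_subspaces:
  assumes "infinite (UNIV :: 'c set)" "finite \<V>" "\<And>V. V \<in> \<V> \<Longrightarrow> vs.subspace V \<and> \<not> W \<subseteq> V"
    and "vs.subspace W"
  shows "\<exists>x\<in>W. \<forall>V\<in>\<V>. x \<notin> V"
  using assms(2,3)
proof (induction \<V>)
  case empty
  then show ?case
    using assms(4) vs.subspace_0 by blast
next
  case (insert V \<V>)
  then obtain x where x: "x \<in> W" "\<forall>V'\<in>\<V>. x \<notin> V'"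
    by auto
  show ?case
  proof (cases "x \<in> V")
    case True
    obtain y where y: "y \<in> W" "y \<notin> V"
      using insert.prems by blast
    have "finite {c. y + \<iota> c * x \<in> V'}" if "V' \<in> \<V>" for V'
      using finite_line_subspace_inter[of V' x y] insert.prems that x(2) by simp
    then have "finite (\<Union>V'\<in>\<V>. {c. y + \<iota> c * x \<in> V'})"
      using insert.hyps(1) by blast
    then obtain c where c: "c \<notin> (\<Union>V'\<in>\<V>. {c. y + \<iota> c * x \<in> V'})"
      using ex_new_if_finite[OF assms(1)] by blast
    have "y + \<iota> c * x \<notin> V"
    proof
      assume "y + \<iota> c * x \<in> V"
      moreover have "vs.subspace V"
        using insert.prems by simp
      ultimately have "(y + \<iota> c * x) + \<iota> (- c) * x \<in> V"
        using vs.subspace_add vs.subspace_scale True by blast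
      then show False
        using y(2) by (simp add: algebra_simps)
    qed
    moreover have "y + \<iota> c * x \<in> W"
      using assms(4) x(1) y(1) by (simp add: vs.subspace_add vs.subspace_scale)
    ultimately show ?thesis
      using c by blast
  qed (use x in auto)
qed

end

lemma field_ext_to_ac: "field_ext \<iota> \<Longrightarrow> field_ext (\<lambda>c. to_ac (\<iota> c))"
  unfolding field_ext_def ring_hom_fn_def by simp

lemma (in field_ext) subspace_range_to_ac: "module.subspace (\<lambda>c x. to_ac (\<iota> c) * x) (range to_ac)"
proof -
  interpret O: field_ext "\<lambda>c. to_ac (\<iota> c)"
    by (rule field_ext_to_ac) unfold_locales
  show ?thesis
    unfolding O.vs.subspace_def by (auto simp flip: to_ac_add to_ac_mult to_ac_0)
qed

context field_ext_pair
begin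

lemma field_ext_pair_to_ac: "field_ext_pair \<iota>K (\<lambda>c. to_ac (\<iota>M c))"
  by (intro field_ext_pair.intro K.field_ext_axioms field_ext_to_ac M.field_ext_axioms)

lemma subspace_preimage_hom_over:
  assumes "hom_over \<iota>K \<iota>M (adjoin \<iota>K S) \<phi>" "M.vs.subspace V"
  shows "K.vs.subspace {x \<in> adjoin \<iota>K S. \<phi> x \<in> V}"
  unfolding K.vs.subspace_def
proof (intro conjI ballI allI)
  have "\<phi> 0 = 0"
    by (rule ring_hom_onD(1)[OF ring_hom_on_hom_over[OF assms(1)]])
  then show "0 \<in> {x \<in> adjoin \<iota>K S. \<phi> x \<in> V}"
    using assms(2) K.subspace_adjoin[of S] by (simp add: M.vs.subspace_0 K.vs.subspace_0)
next
  fix x y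
  assume "x \<in> {x \<in> adjoin \<iota>K S. \<phi> x \<in> V}" "y \<in> {x \<in> adjoin \<iota>K S. \<phi> x \<in> V}"
  then show "x + y \<in> {x \<in> adjoin \<iota>K S. \<phi> x \<in> V}"
    using assms unfolding hom_over_def by (auto intro: adjoin_add M.vs.subspace_add)
next
  fix c x
  assume "x \<in> {x \<in> adjoin \<iota>K S. \<phi> x \<in> V}"
  then show "\<iota>K c * x \<in> {x \<in> adjoin \<iota>K S. \<phi> x \<in> V}"
    using assms adjoin_hom[of \<iota>K c S] unfolding hom_over_def
    by (auto intro: adjoin_mult M.vs.subspace_scale)
qed

lemma hom_over_of_ac:
  assumes "hom_over \<iota>K (\<lambda>c. to_ac (\<iota>M c)) R \<phi>" "\<phi> ` R \<subseteq> range to_ac"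
  shows "hom_over \<iota>K \<iota>M R (\<lambda>x. of_ac (\<phi> x))"
  unfolding hom_over_def
proof (intro conjI ballI allI)
  fix x y
  assume xy: "x \<in> R" "y \<in> R"
  then obtain a b where ab: "\<phi> x = to_ac a" "\<phi> y = to_ac b"
    using assms(2) by blast
  have "\<phi> (x + y) = to_ac (a + b)" "\<phi> (x * y) = to_ac (a * b)"
    using assms(1) xy ab unfolding hom_over_def by simp_all
  then show "of_ac (\<phi> (x + y)) = of_ac (\<phi> x) + of_ac (\<phi> y)"
    and "of_ac (\<phi> (x * y)) = of_ac (\<phi> x) * of_ac (\<phi> y)"
    using ab by (simp_all del: to_ac_add to_ac_mult)
qed (use assms(1) in \<open>simp add: hom_over_def\<close>)

end

lemma (in field_ext_pair) ex_hom_over_alg_closure_into_range: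
  assumes "Th_ex1 \<iota>K \<subseteq> Th_ex1 \<iota>M" "finite S" "S \<subseteq> K.Alg" "y \<in> adjoin \<iota>K S"
  obtains \<phi> where "hom_over \<iota>K (\<lambda>c. to_ac (\<iota>M c)) (adjoin \<iota>K S) \<phi>" "\<phi> y \<in> range to_ac"
proof -
  define \<iota>\<Omega> where "\<iota>\<Omega> = (\<lambda>c. to_ac (\<iota>M c))"
  interpret K\<Omega>: field_ext_pair \<iota>K \<iota>\<Omega>
    unfolding \<iota>\<Omega>_def by (rule field_ext_pair_to_ac)
  have "y \<in> K.Alg"
    using K.adjoin_subset_Alg[OF assms(3)] assms(4) by blast
  then obtain z where z: "poly (map_poly \<iota>M (K.min_poly y)) z = 0"
    using min_poly_has_root_if_Th_ex1_subset[OF assms(1)] by blast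
  have "poly (map_poly \<iota>\<Omega> (K.min_poly y)) (to_ac z) = to_ac (poly (map_poly \<iota>M (K.min_poly y)) z)"
    using ring_hom_on_poly[of UNIV to_ac "map_poly \<iota>M (K.min_poly y)" z]
    by (simp add: ring_hom_on_def is_subring_def poly_over_def map_poly_map_poly \<iota>\<Omega>_def o_def)
  then obtain \<phi>0 where \<phi>0: "hom_over \<iota>K \<iota>\<Omega> (adjoin \<iota>K {y}) \<phi>0" "\<phi>0 y = to_ac z"
    using K\<Omega>.hom_over_adjoin_singleton[OF \<open>y \<in> K.Alg\<close>, of "to_ac z"] z by auto
  obtain \<phi> where \<phi>: "hom_over \<iota>K \<iota>\<Omega> (adjoin \<iota>K (S \<union> {y})) \<phi>"
    "\<And>x. x \<in> adjoin \<iota>K {y} \<Longrightarrow> \<phi> x = \<phi>0 x"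
    using hom_over_extend_alg_closed_finite[OF K\<Omega>.field_ext_pair_axioms assms(2,3) \<phi>0(1)]
      \<open>y \<in> K.Alg\<close> by blast
  have "adjoin \<iota>K (S \<union> {y}) = adjoin \<iota>K S"
    using adjoin_insert_eq[OF assms(4)] by simp
  moreover have "\<phi> y = to_ac z"
    using \<phi>(2)[of y] \<phi>0(2) by (simp add: adjoin_base)
  ultimately show ?thesis
    using \<phi>(1) that unfolding \<iota>\<Omega>_def by auto
qed

lemma (in field_ext_pair) ex_hom_over_adjoin_infinite_base:
  assumes "infinite (UNIV :: 'c set)" "Th_ex1 \<iota>K \<subseteq> Th_ex1 \<iota>M" "finite S" "S \<subseteq> K.Alg"
  obtains \<psi> where "hom_over \<iota>K \<iota>M (adjoin \<iota>K S) \<psi>"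
proof -
  define \<iota>\<Omega> where "\<iota>\<Omega> = (\<lambda>c. to_ac (\<iota>M c))"
  have \<iota>\<Omega>_apply: "\<iota>\<Omega> c = to_ac (\<iota>M c)" for c
    by (simp add: \<iota>\<Omega>_def)
  interpret K\<Omega>: field_ext_pair \<iota>K \<iota>\<Omega>
    unfolding \<iota>\<Omega>_def by (rule field_ext_pair_to_ac)
  define W where "W = adjoin \<iota>K S"
  define \<Phi> where "\<Phi> = (\<lambda>\<phi>. restrict \<phi> W) ` {\<phi>. hom_over \<iota>K \<iota>\<Omega> W \<phi>}"
  define V where "V \<phi> = {x \<in> W. \<phi> x \<in> range (to_ac :: 'm \<Rightarrow> 'm alg_closure)}" for \<phi>
  have hom: "hom_over \<iota>K \<iota>\<Omega> W \<phi>" if "\<phi> \<in> \<Phi>" for \<phi>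
    using that K\<Omega>.hom_over_restrict unfolding \<Phi>_def W_def by auto
  have "\<exists>\<phi>\<in>\<Phi>. W \<subseteq> V \<phi>"
  proof (rule ccontr)
    assume not_in_M: "\<not> (\<exists>\<phi>\<in>\<Phi>. W \<subseteq> V \<phi>)"
    have "finite (V ` \<Phi>)"
      using K\<Omega>.finite_hom_over[OF assms(3,4)] unfolding \<Phi>_def W_def by blast
    moreover have "K.vs.subspace V' \<and> \<not> W \<subseteq> V'" if V': "V' \<in> V ` \<Phi>" for V'
    proof -
      obtain \<phi> where "\<phi> \<in> \<Phi>" "V' = V \<phi>"
        using V' by blast
      then show ?thesis
        using K\<Omega>.subspace_preimage_hom_over[OF hom[OF \<open>\<phi> \<in> \<Phi>\<close>, unfolded W_def]
            M.subspace_range_to_ac[folded \<iota>\<Omega>_apply]] not_in_M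
        unfolding V_def W_def by blast
    qed
    ultimately obtain y where y: "y \<in> W" "\<And>\<phi>. \<phi> \<in> \<Phi> \<Longrightarrow> y \<notin> V \<phi>"
      using K.ex_not_in_finite_union_subspaces[OF assms(1), of "V ` \<Phi>" W] K.subspace_adjoin[of S]
      unfolding W_def by blast
    obtain \<phi> where "hom_over \<iota>K \<iota>\<Omega> W \<phi>" "\<phi> y \<in> range to_ac"
      using ex_hom_over_alg_closure_into_range[OF assms(2-4), of y] y(1) unfolding W_def \<iota>\<Omega>_def
      by blast
    then have "restrict \<phi> W \<in> \<Phi>" "y \<in> V (restrict \<phi> W)"
      using y(1) unfolding \<Phi>_def V_def by auto
    then show False
      using y(2) by blast
  qed
  then obtain \<phi> where "\<phi> \<in> \<Phi>" "W \<subseteq> V \<phi>"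
    by blast
  then have "hom_over \<iota>K \<iota>\<Omega> W \<phi>" "\<phi> ` W \<subseteq> range to_ac"
    using hom unfolding V_def by blast+
  then have "hom_over \<iota>K \<iota>M W (\<lambda>x. of_ac (\<phi> x))"
    unfolding \<iota>\<Omega>_def by (rule hom_over_of_ac)
  then show ?thesis
    using that unfolding W_def by blast
qed

lemma (in field_ext_pair) ex_hom_over_adjoin:
  assumes "Th_ex1 \<iota>K \<subseteq> Th_ex1 \<iota>M" "finite S" "S \<subseteq> K.Alg"
  obtains \<psi> where "hom_over \<iota>K \<iota>M (adjoin \<iota>K S) \<psi>"
  using ex_hom_over_adjoin_finite_base[OF _ assms] ex_hom_over_adjoin_infinite_base[OF _ assms]
  by blast

lemma closedin_product_discrete_finite_support:
  assumes "finite S" "S \<subseteq> I" "\<And>f g. (\<forall>i\<in>S. f i = g i) \<Longrightarrow> P f \<Longrightarrow> P g"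
  shows "closedin (product_topology (\<lambda>i. discrete_topology (R i)) I) {f \<in> PiE I R. P f}"
proof -
  define Top where "Top = product_topology (\<lambda>i. discrete_topology (R i)) I"
  have topspace: "topspace Top = PiE I R"
    unfolding Top_def by simp
  have cylinder_open: "openin Top {g \<in> topspace Top. \<forall>i\<in>T. g i = f i}"
    if "finite T" "T \<subseteq> I" "f \<in> PiE I R" for T f
    using that(1,2)
  proof (induction T)
    case (insert i T)
    have "f i \<in> R i"
      using that(3) insert by auto
    then have "openin Top {g \<in> topspace Top. g i \<in> {f i}}"
      unfolding Top_def using insert
      by (intro openin_continuous_map_preimage[OF continuous_map_product_projection]) auto
    moreover have "{g \<in> topspace Top. \<forall>j\<in>insert i T. g j = f j} =
        {g \<in> topspace Top. g i \<in> {f i}} \<inter> {g \<in> topspace Top. \<forall>j\<in>T. g j = f j}"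
      by auto
    ultimately show ?case
      using insert by (simp add: openin_Int)
  qed simp
  have "openin Top (topspace Top - {f \<in> PiE I R. P f})"
  proof (subst openin_subopen, intro ballI)
    fix f
    assume "f \<in> topspace Top - {f \<in> PiE I R. P f}"
    then have f: "f \<in> PiE I R" "\<not> P f"
      unfolding topspace by auto
    have "{g \<in> topspace Top. \<forall>i\<in>S. g i = f i} \<subseteq> topspace Top - {f \<in> PiE I R. P f}"
      using assms(3) f(2) by fastforce
    then show "\<exists>U. openin Top U \<and> f \<in> U \<and> U \<subseteq> topspace Top - {f \<in> PiE I R. P f}"
      using cylinder_open[OF assms(1,2) f(1)] f(1) topspace by blast
  qed
  then show ?thesis
    unfolding closedin_def Top_def[symmetric] topspace by auto
qed

lemma compactness_PiE:
  fixes R :: "'a \<Rightarrow> 'b set" and P :: "'a set \<Rightarrow> ('a \<Rightarrow> 'b) \<Rightarrow> bool"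
  assumes finite: "\<And>i. i \<in> I \<Longrightarrow> finite (R i)"
    and local: "\<And>S f g. finite S \<Longrightarrow> S \<subseteq> I \<Longrightarrow> (\<forall>i\<in>S. f i = g i) \<Longrightarrow> P S f \<Longrightarrow> P S g"
    and mono: "\<And>S S' f. S \<subseteq> S' \<Longrightarrow> finite S' \<Longrightarrow> S' \<subseteq> I \<Longrightarrow> P S' f \<Longrightarrow> P S f"
    and sat: "\<And>S. finite S \<Longrightarrow> S \<subseteq> I \<Longrightarrow> \<exists>f\<in>PiE I R. P S f"
  shows "\<exists>f\<in>PiE I R. \<forall>S. finite S \<and> S \<subseteq> I \<longrightarrow> P S f"
proof -
  define G where "G S = {f \<in> PiE I R. P S f}" for S
  have compact: "compact_space (product_topology (\<lambda>i. discrete_topology (R i)) I)"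
    by (simp add: compact_space_product_topology compact_space_discrete_topology finite)
  have "\<Inter>(G ` {S. finite S \<and> S \<subseteq> I}) \<noteq> {}"
  proof (rule compact[unfolded compact_space_fip, rule_format], intro conjI allI impI)
    show "\<forall>C\<in>G ` {S. finite S \<and> S \<subseteq> I}.
        closedin (product_topology (\<lambda>i. discrete_topology (R i)) I) C"
      unfolding G_def using local by (auto intro: closedin_product_discrete_finite_support)
  next
    fix \<F>
    assume "finite \<F> \<and> \<F> \<subseteq> G ` {S. finite S \<and> S \<subseteq> I}"
    then obtain \<S> where \<S>: "\<S> \<subseteq> {S. finite S \<and> S \<subseteq> I}" "finite \<S>" "\<F> = G ` \<S>"
      by (meson finite_subset_image)
    then have "finite (\<Union>\<S>)" "\<Union>\<S> \<subseteq> I"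
      by auto
    then obtain f where "f \<in> PiE I R" "P (\<Union>\<S>) f"
      using sat by blast
    then have "f \<in> G S" if "S \<in> \<S>" for S
      using mono[of S "\<Union>\<S>" f] that \<open>finite (\<Union>\<S>)\<close> \<open>\<Union>\<S> \<subseteq> I\<close> unfolding G_def by auto
    then show "\<Inter>\<F> \<noteq> {}"
      using \<S>(3) by blast
  qed
  then obtain f where "f \<in> \<Inter>(G ` {S. finite S \<and> S \<subseteq> I})"
    by blast
  then show ?thesis
    unfolding G_def by (intro bexI[of _ f]) auto
qed

section \<open>Embedding the relative algebraic closure\<close>

definition partial_embedding ::
    "('c \<Rightarrow> 'k::field) \<Rightarrow> ('c \<Rightarrow> 'm::field) \<Rightarrow> 'k set \<Rightarrow> ('k \<Rightarrow> 'm) \<Rightarrow> bool" where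
  "partial_embedding \<iota>K \<iota>M S \<sigma> \<longleftrightarrow> inj_on \<sigma> S \<and>
     (\<forall>x\<in>S. \<forall>y\<in>S. (x + y \<in> S \<longrightarrow> \<sigma> (x + y) = \<sigma> x + \<sigma> y) \<and> (x * y \<in> S \<longrightarrow> \<sigma> (x * y) = \<sigma> x * \<sigma> y)) \<and>
     (\<forall>c. \<iota>K c \<in> S \<longrightarrow> \<sigma> (\<iota>K c) = \<iota>M c)"

lemma partial_embedding_cong:
  assumes "\<And>x. x \<in> S \<Longrightarrow> \<sigma> x = \<tau> x" "partial_embedding \<iota>K \<iota>M S \<sigma>"
  shows "partial_embedding \<iota>K \<iota>M S \<tau>"
  using assms unfolding partial_embedding_def inj_on_def by simp

lemma partial_embedding_subset:
  "S \<subseteq> S' \<Longrightarrow> partial_embedding \<iota>K \<iota>M S' \<sigma> \<Longrightarrow> partial_embedding \<iota>K \<iota>M S \<sigma>"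
  unfolding partial_embedding_def by (blast intro: inj_on_subset)

context field_ext_pair
begin

lemma partial_embedding_if_hom_over:
  assumes "hom_over \<iota>K \<iota>M (adjoin \<iota>K S) \<psi>" "S \<subseteq> K.Alg"
  shows "partial_embedding \<iota>K \<iota>M S \<psi>"
  unfolding partial_embedding_def
proof (intro conjI ballI allI impI)
  show "inj_on \<psi> S"
    by (rule inj_on_subset[OF inj_on_hom_over[OF assms]]) (auto intro: adjoin_base)
  fix x y
  assume "x \<in> S" "y \<in> S"
  then have "x \<in> adjoin \<iota>K S" "y \<in> adjoin \<iota>K S"
    by (auto intro: adjoin_base)
  then show "\<psi> (x + y) = \<psi> x + \<psi> y" "\<psi> (x * y) = \<psi> x * \<psi> y"
    using assms(1) unfolding hom_over_def by blast+
qed (use assms(1) in \<open>simp add: hom_over_def\<close>)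

lemma embedding_over_if_partial_embeddings:
  assumes "\<And>S. finite S \<Longrightarrow> S \<subseteq> K.Alg \<Longrightarrow> partial_embedding \<iota>K \<iota>M S \<sigma>"
  shows "embedding_over \<iota>K \<iota>M K.Alg \<sigma>"
  unfolding embedding_over_def
proof (intro conjI ballI allI)
  show "inj_on \<sigma> K.Alg"
  proof (rule inj_onI)
    fix x y
    assume "x \<in> K.Alg" "y \<in> K.Alg" "\<sigma> x = \<sigma> y"
    moreover from this have "inj_on \<sigma> {x, y}"
      using assms[of "{x, y}"] unfolding partial_embedding_def by blast
    ultimately show "x = y"
      by (auto dest: inj_onD)
  qed
  show hom: "\<sigma> (\<iota>K c) = \<iota>M c" for c
    using assms[of "{\<iota>K c}"] K.hom_in_Alg unfolding partial_embedding_def by blast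
  show "\<sigma> 1 = 1"
    using hom[of 1] by simp
  fix x y
  assume "x \<in> K.Alg" "y \<in> K.Alg"
  then have "partial_embedding \<iota>K \<iota>M {x, y, x + y} \<sigma>" "partial_embedding \<iota>K \<iota>M {x, y, x * y} \<sigma>"
    using assms K.Alg_add K.Alg_mult by simp_all
  then show "\<sigma> (x + y) = \<sigma> x + \<sigma> y" "\<sigma> (x * y) = \<sigma> x * \<sigma> y"
    unfolding partial_embedding_def by (meson insertCI)+
qed

lemma ex_partial_embedding_in_conjugates:
  assumes "Th_ex1 \<iota>K \<subseteq> Th_ex1 \<iota>M" "finite S" "S \<subseteq> K.Alg"
  shows "\<exists>f\<in>PiE K.Alg conjugates. partial_embedding \<iota>K \<iota>M S f"
proof -
  obtain \<psi> where \<psi>: "hom_over \<iota>K \<iota>M (adjoin \<iota>K S) \<psi>"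
    using ex_hom_over_adjoin[OF assms] .
  have conjugate: "\<exists>z. z \<in> conjugates a" if "a \<in> K.Alg" for a
    using min_poly_has_root_if_Th_ex1_subset[OF assms(1) that] unfolding conjugates_def by blast
  define f where "f a = (if a \<in> K.Alg then if a \<in> adjoin \<iota>K S then \<psi> a
    else (SOME z. z \<in> conjugates a) else undefined)" for a
  have "f \<in> PiE K.Alg conjugates"
  proof (rule PiE_I)
    fix a
    assume a: "a \<in> K.Alg"
    show "f a \<in> conjugates a"
    proof (cases "a \<in> adjoin \<iota>K S")
      case True
      then show ?thesis
        using hom_over_in_conjugates[OF \<psi> True a] a unfolding f_def by simp
    next
      case False
      then show ?thesis
        using someI_ex[OF conjugate[OF a]] a unfolding f_def by simp
    qed
  qed (simp add: f_def)
  moreover have "partial_embedding \<iota>K \<iota>M S f"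
  proof (rule partial_embedding_cong)
    show "partial_embedding \<iota>K \<iota>M S \<psi>"
      by (rule partial_embedding_if_hom_over[OF \<psi> assms(3)])
    show "\<psi> x = f x" if "x \<in> S" for x
      using that assms(3) adjoin_base[OF that, of \<iota>K] unfolding f_def by auto
  qed
  ultimately show ?thesis
    by blast
qed

lemma ex_embedding_if_Th_ex1_subset:
  assumes "Th_ex1 \<iota>K \<subseteq> Th_ex1 \<iota>M"
  shows "\<exists>\<sigma>. embedding_over \<iota>K \<iota>M K.Alg \<sigma>"
proof -
  have "\<exists>\<sigma>\<in>PiE K.Alg conjugates. \<forall>S. finite S \<and> S \<subseteq> K.Alg \<longrightarrow> partial_embedding \<iota>K \<iota>M S \<sigma>"
  proof (rule compactness_PiE)
    fix S f g
    assume "\<forall>i\<in>S. f i = g i" "partial_embedding \<iota>K \<iota>M S f"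
    then show "partial_embedding \<iota>K \<iota>M S g"
      using partial_embedding_cong[of S f g] by blast
  qed (use finite_conjugates partial_embedding_subset ex_partial_embedding_in_conjugates[OF assms]
      in auto)
  then obtain \<sigma> where "\<And>S. finite S \<Longrightarrow> S \<subseteq> K.Alg \<Longrightarrow> partial_embedding \<iota>K \<iota>M S \<sigma>"
    by blast
  then show ?thesis
    using embedding_over_if_partial_embeddings by blast
qed

end

theorem lemma4p7:
  fixes \<iota>K :: "'c::field \<Rightarrow> 'k::field" and \<iota>L :: "'c \<Rightarrow> 'l::field"
  assumes "ring_hom_fn \<iota>K" and "ring_hom_fn \<iota>L"
  shows "Th_ex1 \<iota>K \<subseteq> Th_ex1 \<iota>L \<longleftrightarrow>
           ((\<exists>\<sigma>. embedding_over \<iota>K \<iota>L (rel_alg_closure \<iota>K) \<sigma>) \<and>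
            (infinite (UNIV :: 'k set) \<longrightarrow> infinite (UNIV :: 'l set)))"
proof -
  interpret field_ext_pair \<iota>K \<iota>L
    using assms by (simp add: field_ext_pair_def field_ext_def)
  show ?thesis
  proof
    assume "Th_ex1 \<iota>K \<subseteq> Th_ex1 \<iota>L"
    then show "(\<exists>\<sigma>. embedding_over \<iota>K \<iota>L (rel_alg_closure \<iota>K) \<sigma>) \<and>
        (infinite (UNIV :: 'k set) \<longrightarrow> infinite (UNIV :: 'l set))"
      using ex_embedding_if_Th_ex1_subset infinite_if_Th_ex1_subset by blast
  next
    assume "(\<exists>\<sigma>. embedding_over \<iota>K \<iota>L (rel_alg_closure \<iota>K) \<sigma>) \<and>
        (infinite (UNIV :: 'k set) \<longrightarrow> infinite (UNIV :: 'l set))"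
    then show "Th_ex1 \<iota>K \<subseteq> Th_ex1 \<iota>L"
      using Th_ex1_subset_if_embedding by blast
  qed
qed

end
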